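(* Let $\rho:L^p_{\mathcal G}(\mathcal F)\to L^0(\mathcal G)$. (i) If $\rho$ is ($\downarrow$MON), (REG) and (CAS), then for every $Q\in\mathcal P^q$ and $X\in L^p_{\mathcal G}(\mathcal F)$, $$R\big(E_Q[-X|\mathcal G],Q\big)=E_Q[-X|\mathcal G]-\rho^*(-Q),\qquad \rho^*(-Q):=\operatorname*{ess\,sup}_{\xi\in L^p_{\mathcal G}(\mathcal F)}\big\{E_Q[-\xi|\mathcal G]-\rho(\xi)\big\},$$ where $R(Y,Q)=\operatorname{ess\,inf}_{\xi\in L^p_{\mathcal G}(\mathcal F)}\{\rho(\xi): E_Q[-\xi|\mathcal G]=Y\}$. (ii) If $\rho$ is (REG), ($\downarrow$MON), (EVQ) and (CAS), then for every $X\in L^p_{\mathcal G}(\mathcal F)$, $$\rho(X)=\operatorname*{ess\,sup}_{Q\in\mathcal P^q}\big\{E_Q[-X|\mathcal G]-\rho^*(-Q)\big\}.$$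
   Context: Let $(\Omega,\mathcal F,\mathbb P)$ be a probability space, $\mathcal G\subseteq\mathcal F$ a sub-$\sigma$-algebra; (in)equalities a.s.; "on $A$" means a.s. on $A$. $L^0(\mathcal G)$: a.s. finite $\mathcal G$-measurable r.v. Fix $p\in[1,\infty]$, $1/p+1/q=1$. $\|X|\mathcal G\|_p=E[|X|^p|\mathcal G]^{1/p}$ ($p<\infty$, with $E[W|\mathcal G]=\lim_nE[W\wedge n|\mathcal G]$ for $W\ge0$), $\|X|\mathcal G\|_\infty=\operatorname{ess\,inf}\{Y\ \mathcal G\text{-meas.},Y\ge|X|\}$; $L^p_{\mathcal G}(\mathcal F)=\{X:\|X|\mathcal G\|_p<\infty \text{ a.s.}\}=L^0(\mathcal G)\cdot L^p(\mathcal F)$ with $E[YW|\mathcal G]:=YE[W|\mathcal G]$; likewise $L^q_{\mathcal G}(\mathcal F)$. $\mathcal P^q=\{Z\in L^q_{\mathcal G}(\mathcal F):Z\ge0,E[Z|\mathcal G]=1\}$, identified with probabilities $Q$, $dQ/d\mathbb P=Z$, $E_Q[X|\mathcal G]=E[ZX|\mathcal G]$. (REG): $\rho(X_1\mathbf 1_A+X_2\mathbf 1_{A^c})=\rho(X_1)\mathbf 1_A+\rho(X_2)\mathbf 1_{A^c}$, $A\in\mathcal G$. ($\downarrow$MON): $X_1\ge X_2\Rightarrow\rho(X_1)\le\rho(X_2)$. (CAS): $\rho(X+\Lambda)=\rho(X)-\Lambda$ for all $\Lambda\in L^0(\mathcal G)$, $X\in L^p_{\mathcal G}(\mathcal F)$.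 (EVQ): for every $Y\in L^0(\mathcal G)$ the set $\{\xi:\rho(\xi)\le Y\}$ is conditionally evenly convex, where: for $\mathcal C\subseteq L^p_{\mathcal G}(\mathcal F)$, $A_{\mathcal C}$ is the maximal $A\in\mathcal G$ with $\mathcal C\mathbf 1_A=L^p_{\mathcal G}(\mathcal F)\mathbf 1_A$, $D_{\mathcal C}=\Omega\setminus A_{\mathcal C}$; $X$ is outside $\mathcal C$ if for no $A\in\mathcal G$, $A\subseteq D_{\mathcal C}$, $\mathbb P(A)>0$, is there $\xi\in\mathcal C$ with $X\mathbf 1_A=\xi\mathbf 1_A$; $\mathcal C$ is conditionally evenly convex if $\sum_n\mathbf 1_{A_n}X_n\in\mathcal C$ for all countable $\mathcal G$-partitions $\{A_n\}$ and $\{X_n\}\subseteq\mathcal C$, and for every $X$ outside $\mathcal C$ there is $Z\in L^q_{\mathcal G}(\mathcal F)$ with $E[ZX|\mathcal G]>E[Z\xi|\mathcal G]$ on $D_{\mathcal C}$ for all $\xi\in\mathcal C$. *)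

theory Defs
  imports "HOL-Probability.Probability"
begin

definition is_cond_ess_sup :: "'a measure \<Rightarrow> 'a measure \<Rightarrow> ('a \<Rightarrow> ereal) set \<Rightarrow> ('a \<Rightarrow> ereal) \<Rightarrow> bool" where
  "is_cond_ess_sup M G S f \<longleftrightarrow>
     f \<in> borel_measurable G \<and>
     (\<forall>g\<in>S. AE \<omega> in M. g \<omega> \<le> f \<omega>) \<and>
     (\<forall>h \<in> borel_measurable G. (\<forall>g\<in>S. AE \<omega> in M. g \<omega> \<le> h \<omega>) \<longrightarrow> (AE \<omega> in M. f \<omega> \<le> h \<omega>))"

definition is_cond_ess_inf :: "'a measure \<Rightarrow> 'a measure \<Rightarrow> ('a \<Rightarrow> ereal) set \<Rightarrow> ('a \<Rightarrow> ereal) \<Rightarrow> bool" where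
  "is_cond_ess_inf M G S f \<longleftrightarrow>
     f \<in> borel_measurable G \<and>
     (\<forall>g\<in>S. AE \<omega> in M. f \<omega> \<le> g \<omega>) \<and>
     (\<forall>h \<in> borel_measurable G. (\<forall>g\<in>S. AE \<omega> in M. h \<omega> \<le> g \<omega>) \<longrightarrow> (AE \<omega> in M. h \<omega> \<le> f \<omega>))"

definition cond_ess_sup :: "'a measure \<Rightarrow> 'a measure \<Rightarrow> ('a \<Rightarrow> ereal) set \<Rightarrow> ('a \<Rightarrow> ereal)" where
  "cond_ess_sup M G S = (SOME f. is_cond_ess_sup M G S f)"

definition cond_ess_inf :: "'a measure \<Rightarrow> 'a measure \<Rightarrow> ('a \<Rightarrow> ereal) set \<Rightarrow> ('a \<Rightarrow> ereal)" where
  "cond_ess_inf M G S = (SOME f. is_cond_ess_inf M G S f)"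

definition cexp :: "'a measure \<Rightarrow> 'a measure \<Rightarrow> ('a \<Rightarrow> real) \<Rightarrow> ('a \<Rightarrow> ereal)" where
  "cexp M G X = (\<lambda>\<omega>. enn2ereal (nn_cond_exp M G (\<lambda>x. ennreal (X x)) \<omega>)
                     - enn2ereal (nn_cond_exp M G (\<lambda>x. ennreal (- X x)) \<omega>))"

definition LpG :: "'a measure \<Rightarrow> 'a measure \<Rightarrow> ereal \<Rightarrow> ('a \<Rightarrow> real) set" where
  "LpG M G p = {X \<in> borel_measurable M.
     (if p = \<infinity>
      then (AE \<omega> in M. cond_ess_inf M G
              {Y. Y \<in> borel_measurable G \<and> (AE x in M. ereal \<bar>X x\<bar> \<le> Y x)} \<omega> < \<infinity>)
      else (AE \<omega> in M. nn_cond_exp M G (\<lambda>x. ennreal (\<bar>X x\<bar> powr real_of_ereal p)) \<omega> < \<infinity>))}"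

definition conj_exp :: "ereal \<Rightarrow> ereal" where
  "conj_exp p = (if p = 1 then \<infinity> else if p = \<infinity> then 1 else p / (p - 1))"

definition PqG :: "'a measure \<Rightarrow> 'a measure \<Rightarrow> ereal \<Rightarrow> ('a \<Rightarrow> real) set" where
  "PqG M G q = {Z \<in> LpG M G q. (AE \<omega> in M. 0 \<le> Z \<omega>) \<and> (AE \<omega> in M. cexp M G Z \<omega> = 1)}"

definition well_defined_ae :: "'a measure \<Rightarrow> 'a measure \<Rightarrow> ereal \<Rightarrow> (('a \<Rightarrow> real) \<Rightarrow> ('a \<Rightarrow> real)) \<Rightarrow> bool" where
  "well_defined_ae M G p \<rho> \<longleftrightarrow>
     (\<forall>X\<in>LpG M G p. \<rho> X \<in> borel_measurable G) \<and>
     (\<forall>X\<in>LpG M G p. \<forall>Y\<in>LpG M G p. (AE \<omega> in M. X \<omega> = Y \<omega>) \<longrightarrow> (AE \<omega> in M. \<rho> X \<omega> = \<rho> Y \<omega>))"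

definition REG :: "'a measure \<Rightarrow> 'a measure \<Rightarrow> ereal \<Rightarrow> (('a \<Rightarrow> real) \<Rightarrow> ('a \<Rightarrow> real)) \<Rightarrow> bool" where
  "REG M G p \<rho> \<longleftrightarrow> (\<forall>X1\<in>LpG M G p. \<forall>X2\<in>LpG M G p. \<forall>A\<in>sets G.
     AE \<omega> in M. \<rho> (\<lambda>x. X1 x * indicator A x + X2 x * indicator (space M - A) x) \<omega>
               = \<rho> X1 \<omega> * indicator A \<omega> + \<rho> X2 \<omega> * indicator (space M - A) \<omega>)"

definition MON_dec :: "'a measure \<Rightarrow> 'a measure \<Rightarrow> ereal \<Rightarrow> (('a \<Rightarrow> real) \<Rightarrow> ('a \<Rightarrow> real)) \<Rightarrow> bool" where
  "MON_dec M G p \<rho> \<longleftrightarrow> (\<forall>X1\<in>LpG M G p. \<forall>X2\<in>LpG M G p.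
     (AE \<omega> in M. X2 \<omega> \<le> X1 \<omega>) \<longrightarrow> (AE \<omega> in M. \<rho> X1 \<omega> \<le> \<rho> X2 \<omega>))"

definition CAS :: "'a measure \<Rightarrow> 'a measure \<Rightarrow> ereal \<Rightarrow> (('a \<Rightarrow> real) \<Rightarrow> ('a \<Rightarrow> real)) \<Rightarrow> bool" where
  "CAS M G p \<rho> \<longleftrightarrow> (\<forall>X\<in>LpG M G p. \<forall>\<Lambda>::'a \<Rightarrow> real. \<Lambda> \<in> borel_measurable G \<longrightarrow>
     (AE \<omega> in M. \<rho> (\<lambda>x. X x + \<Lambda> x) \<omega> = \<rho> X \<omega> - \<Lambda> \<omega>))"

text \<open>A is a G-set on which C restricted to A equals L^p_G restricted to A\<close>
definition full_on :: "'a measure \<Rightarrow> 'a measure \<Rightarrow> ereal \<Rightarrow> ('a \<Rightarrow> real) set \<Rightarrow> 'a set \<Rightarrow> bool" where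
  "full_on M G p C A \<longleftrightarrow> A \<in> sets G \<and>
     (\<forall>X\<in>LpG M G p. \<exists>\<xi>\<in>C. AE \<omega> in M. \<omega> \<in> A \<longrightarrow> X \<omega> = \<xi> \<omega>)"

definition is_A_C :: "'a measure \<Rightarrow> 'a measure \<Rightarrow> ereal \<Rightarrow> ('a \<Rightarrow> real) set \<Rightarrow> 'a set \<Rightarrow> bool" where
  "is_A_C M G p C A \<longleftrightarrow> full_on M G p C A \<and>
     (\<forall>B. full_on M G p C B \<longrightarrow> (AE \<omega> in M. \<omega> \<in> B \<longrightarrow> \<omega> \<in> A))"

definition outside :: "'a measure \<Rightarrow> 'a measure \<Rightarrow> ('a \<Rightarrow> real) set \<Rightarrow> 'a set \<Rightarrow> ('a \<Rightarrow> real) \<Rightarrow> bool" where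
  "outside M G C D X \<longleftrightarrow> \<not> (\<exists>A\<in>sets G. A \<subseteq> D \<and> measure M A > 0 \<and>
     (\<exists>\<xi>\<in>C. AE \<omega> in M. \<omega> \<in> A \<longrightarrow> X \<omega> = \<xi> \<omega>))"

definition cond_evenly_convex :: "'a measure \<Rightarrow> 'a measure \<Rightarrow> ereal \<Rightarrow> ('a \<Rightarrow> real) set \<Rightarrow> bool" where
  "cond_evenly_convex M G p C \<longleftrightarrow>
     (\<forall>(A :: nat \<Rightarrow> 'a set) (X :: nat \<Rightarrow> 'a \<Rightarrow> real).
        (\<forall>n. A n \<in> sets G) \<and> disjoint_family A \<and> (\<Union>n. A n) = space M \<and> (\<forall>n. X n \<in> C)
        \<longrightarrow> (\<lambda>\<omega>. \<Sum>n. indicator (A n) \<omega> * X n \<omega>) \<in> C) \<and>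
     (\<forall>AC. is_A_C M G p C AC \<longrightarrow>
        (\<forall>X\<in>LpG M G p. outside M G C (space M - AC) X \<longrightarrow>
          (\<exists>Z\<in>LpG M G (conj_exp p). \<forall>\<xi>\<in>C.
             AE \<omega> in M. \<omega> \<in> space M - AC \<longrightarrow>
               cexp M G (\<lambda>x. Z x * X x) \<omega> > cexp M G (\<lambda>x. Z x * \<xi> x) \<omega>)))"

definition EVQ :: "'a measure \<Rightarrow> 'a measure \<Rightarrow> ereal \<Rightarrow> (('a \<Rightarrow> real) \<Rightarrow> ('a \<Rightarrow> real)) \<Rightarrow> bool" where
  "EVQ M G p \<rho> \<longleftrightarrow> (\<forall>Y::'a \<Rightarrow> real. Y \<in> borel_measurable G \<longrightarrow>
     cond_evenly_convex M G p {\<xi> \<in> LpG M G p. AE \<omega> in M. \<rho> \<xi> \<omega> \<le> Y \<omega>})"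

text \<open>rho^*(-Q) for Q with density Z\<close>
definition rho_star :: "'a measure \<Rightarrow> 'a measure \<Rightarrow> ereal \<Rightarrow> (('a \<Rightarrow> real) \<Rightarrow> ('a \<Rightarrow> real)) \<Rightarrow> ('a \<Rightarrow> real) \<Rightarrow> ('a \<Rightarrow> ereal)" where
  "rho_star M G p \<rho> Z = cond_ess_sup M G
     ((\<lambda>\<xi>. \<lambda>\<omega>. cexp M G (\<lambda>x. Z x * - \<xi> x) \<omega> - ereal (\<rho> \<xi> \<omega>)) ` LpG M G p)"

definition R_fun :: "'a measure \<Rightarrow> 'a measure \<Rightarrow> ereal \<Rightarrow> (('a \<Rightarrow> real) \<Rightarrow> ('a \<Rightarrow> real)) \<Rightarrow> ('a \<Rightarrow> ereal) \<Rightarrow> ('a \<Rightarrow> real) \<Rightarrow> ('a \<Rightarrow> ereal)" where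
  "R_fun M G p \<rho> Y Z = cond_ess_inf M G
     ((\<lambda>\<xi>. \<lambda>\<omega>. ereal (\<rho> \<xi> \<omega>)) `
        {\<xi> \<in> LpG M G p. AE \<omega> in M. cexp M G (\<lambda>x. Z x * - \<xi> x) \<omega> = Y \<omega>})"

end

theory Submission
  imports Defs
begin

text \<open>
  For Q \<in> P^q the Fenchel inequality E_Q[-\<xi>|G] - rho(\<xi>) \<le> rho^*(-Q) shows that
  every position \<xi> with E_Q[-\<xi>|G] = Y has risk at least Y - rho^*(-Q).  Conversely, any \<eta>
  can be shifted by the G-measurable cash amount E_Q[-\<eta>|G] - Y so that its expected loss
  becomes Y; by cash additivity its risk drops by that amount, which yields the reverse bound.

  The Fenchel inequality gives rho(X) \<ge> the essential supremum.  For the converse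
  fix \<epsilon> > 0 and let C be the sublevel set {rho \<le> rho(X) - \<epsilon>}.  By regularity and cash
  additivity A_C is empty and X lies outside C, so conditional even convexity provides a
  Z \<in> L^q_G separating X from C.  Monotonicity forces Z \<le> 0, separation from X + \<epsilon>
  forces E[Z|G] < 0, hence Q = Z/E[Z|G] \<in> P^q, and separation from all of C (again via cash
  shifts) gives E_Q[-X|G] - rho^*(-Q) \<ge> rho(X) - \<epsilon>.  Letting \<epsilon> \<rightarrow> 0 concludes.
\<close>

section \<open>Essential infima of families of measurable functions\<close>

text \<open>A strictly increasing bounded map from the extended reals into the reals.  Integrating
  it turns order comparisons of ereal-valued functions into comparisons of real numbers.\<close>
definition bounded_embedding :: "ereal \<Rightarrow> real" where
  "bounded_embedding x =
     arctan (real_of_ereal x) + (if x = \<infinity> then 2 else 0) - (if x = -\<infinity> then 2 else 0)"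

lemma abs_arctan_less_2: "\<bar>arctan y\<bar> < 2"
proof -
  have "\<bar>arctan y\<bar> < pi / 2" using arctan_bounded[of y] by auto
  also have "pi / 2 < 2" using pi_less_4 by simp
  finally show ?thesis .
qed

lemma bounded_embedding_bound: "\<bar>bounded_embedding x\<bar> \<le> 4"
  using abs_arctan_less_2[of "real_of_ereal x"] unfolding bounded_embedding_def by (cases x) auto

lemma bounded_embedding_lower: "-4 \<le> bounded_embedding x"
  using bounded_embedding_bound[of x] by linarith

lemma strict_mono_bounded_embedding: "strict_mono bounded_embedding"
proof (rule strict_monoI)
  fix x y :: ereal assume "x < y"
  then show "bounded_embedding x < bounded_embedding y"
    using abs_arctan_less_2[of "real_of_ereal x"] abs_arctan_less_2[of "real_of_ereal y"]
    by (cases x; cases y) (auto simp: bounded_embedding_def arctan_less_iff)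
qed

lemma bounded_embedding_measurable[measurable]:
  assumes [measurable]: "u \<in> borel_measurable N"
  shows "(\<lambda>\<omega>. bounded_embedding (u \<omega>)) \<in> borel_measurable N"
  unfolding bounded_embedding_def by measurable

context prob_space
begin

lemma integrable_bounded_embedding:
  "u \<in> borel_measurable M \<Longrightarrow> integrable M (\<lambda>\<omega>. bounded_embedding (u \<omega>))"
  by (rule integrable_const_bound[where B=4]) (auto simp: bounded_embedding_bound)

lemma AE_eq_if_embedded_integral_le:
  assumes [measurable]: "u \<in> borel_measurable M" "v \<in> borel_measurable M"
    and le: "\<And>\<omega>. v \<omega> \<le> u \<omega>"
    and int_le: "(\<integral>\<omega>. bounded_embedding (u \<omega>) \<partial>M) \<le> (\<integral>\<omega>. bounded_embedding (v \<omega>) \<partial>M)"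
  shows "AE \<omega> in M. u \<omega> = v \<omega>"
proof -
  note mono = strict_mono_less_eq[OF strict_mono_bounded_embedding]
  have nonneg: "0 \<le> bounded_embedding (u \<omega>) - bounded_embedding (v \<omega>)" for \<omega>
    using le[of \<omega>] mono by simp
  have "(\<integral>\<omega>. bounded_embedding (u \<omega>) - bounded_embedding (v \<omega>) \<partial>M) = 0"
    using int_le integral_nonneg_AE[of "\<lambda>\<omega>. bounded_embedding (u \<omega>) - bounded_embedding (v \<omega>)" M]
      nonneg integrable_bounded_embedding by simp
  then have "AE \<omega> in M. bounded_embedding (u \<omega>) - bounded_embedding (v \<omega>) = 0"
    by (subst (asm) integral_nonneg_eq_0_iff_AE) (use nonneg integrable_bounded_embedding in auto)
  then show ?thesis
    by eventually_elim (simp add: strict_mono_eq[OF strict_mono_bounded_embedding])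
qed

lemma embedded_integral_minimum_exists:
  fixes U :: "('a \<Rightarrow> ereal) set"
  assumes ne: "U \<noteq> {}" and meas: "U \<subseteq> borel_measurable M"
    and closed: "\<And>u. (\<forall>n::nat. u n \<in> U) \<Longrightarrow> (\<lambda>\<omega>. INF n. u n \<omega>) \<in> U"
  shows "\<exists>u\<in>U. \<forall>v\<in>U. (\<integral>\<omega>. bounded_embedding (u \<omega>) \<partial>M) \<le> (\<integral>\<omega>. bounded_embedding (v \<omega>) \<partial>M)"
proof -
  define I where "I u = (\<integral>\<omega>. bounded_embedding (u \<omega>) \<partial>M)" for u
  have I_mono: "I u \<le> I v" if "u \<in> U" "v \<in> U" "\<And>\<omega>. u \<omega> \<le> v \<omega>" for u v
    unfolding I_def using that meas integrable_bounded_embedding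
    by (intro integral_mono) (auto simp: strict_mono_less_eq[OF strict_mono_bounded_embedding])
  have I_lower: "-4 \<le> I u" if "u \<in> U" for u
  proof -
    have "(\<integral>\<omega>. -4 \<partial>M) \<le> I u" unfolding I_def
      by (rule integral_mono) (use that meas integrable_bounded_embedding bounded_embedding_lower in auto)
    then show ?thesis by (simp add: prob_space)
  qed
  define c where "c = Inf (I ` U)"
  have bdd: "bdd_below (I ` U)" using I_lower by (auto intro: bdd_belowI[where m="-4"])
  have c_le: "c \<le> I u" if "u \<in> U" for u unfolding c_def using bdd that by (auto intro: cInf_lower)
  have "\<exists>u\<in>U. I u < c + 1 / (real n + 1)" for n
    using cInf_lessD[of "I ` U" "c + 1 / (real n + 1)"] ne unfolding c_def by auto
  then obtain un where un: "\<And>n. un n \<in> U" "\<And>n. I (un n) < c + 1 / (real n + 1)" by metis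
  define u where "u = (\<lambda>\<omega>. INF n. un n \<omega>)"
  have uU: "u \<in> U" unfolding u_def using closed un by blast
  have "I u \<le> c"
  proof (rule field_le_epsilon)
    fix e :: real assume "0 < e"
    then obtain n :: nat where "1 / (real n + 1) < e"
      by (metis add.commute nat_approx_posE of_nat_Suc)
    moreover have "I u \<le> I (un n)" by (rule I_mono) (use uU un in \<open>auto simp: u_def intro: INF_lower\<close>)
    ultimately show "I u \<le> c + e" using un(2)[of n] by simp
  qed
  then show ?thesis using uU c_le unfolding I_def by (auto intro: order_trans)
qed

text \<open>Such a family contains an a.e. smallest element, namely a minimiser of the integral of
  the bounded embedding.  This yields existence of conditional essential suprema and infima.\<close>
lemma AE_least_element_exists:
  fixes U :: "('a \<Rightarrow> ereal) set"
  assumes "U \<noteq> {}" and meas: "U \<subseteq> borel_measurable M"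
    and closed: "\<And>u. (\<forall>n::nat. u n \<in> U) \<Longrightarrow> (\<lambda>\<omega>. INF n. u n \<omega>) \<in> U"
  shows "\<exists>u\<in>U. \<forall>v\<in>U. AE \<omega> in M. u \<omega> \<le> v \<omega>"
proof -
  obtain u where uU: "u \<in> U" and u_min: "\<And>v. v \<in> U \<Longrightarrow>
      (\<integral>\<omega>. bounded_embedding (u \<omega>) \<partial>M) \<le> (\<integral>\<omega>. bounded_embedding (v \<omega>) \<partial>M)"
    using embedded_integral_minimum_exists[OF assms] by blast
  show ?thesis
  proof (intro bexI[OF _ uU] ballI)
    fix v assume vU: "v \<in> U"
    define w where "w = (\<lambda>\<omega>. INF n::nat. (if n = 0 then u else v) \<omega>)"
    have wU: "w \<in> U" unfolding w_def by (rule closed) (use uU vU in auto)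
    have w_min: "w \<omega> = min (u \<omega>) (v \<omega>)" for \<omega>
    proof -
      have "range (\<lambda>n::nat. (if n = 0 then u else v) \<omega>) = {u \<omega>, v \<omega>}"
        by (auto simp: image_def intro: exI[of _ 0] exI[of _ 1])
      then show ?thesis unfolding w_def by (simp add: inf_min)
    qed
    have "w \<omega> \<le> u \<omega>" for \<omega> by (simp add: w_min)
    then have "AE \<omega> in M. u \<omega> = w \<omega>"
      by (intro AE_eq_if_embedded_integral_le) (use meas uU wU u_min[OF wU] in auto)
    then show "AE \<omega> in M. u \<omega> \<le> v \<omega>" by eventually_elim (metis w_min min.absorb_iff1)
  qed
qed

end

locale prob_subalgebra = prob_space M for M :: "'a measure" + fixes G :: "'a measure"
  assumes sub: "subalgebra M G"

sublocale prob_subalgebra \<subseteq> subalg: finite_measure_subalgebra M G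
  by unfold_locales (rule sub)

context prob_subalgebra
begin

lemma measurable_from_G: "f \<in> borel_measurable G \<Longrightarrow> f \<in> borel_measurable M"
  by (rule measurable_from_subalg[OF sub])

lemma sets_G_in_M: "A \<in> sets G \<Longrightarrow> A \<in> sets M"
  using sub unfolding subalgebra_def by auto

lemma space_G: "space G = space M"
  using sub unfolding subalgebra_def by auto

text \<open>Conditional essential suprema exist: the G-measurable a.e. upper bounds of S are closed
  under countable infima, so they have an a.e. least element.\<close>
lemma cond_ess_sup_spec: "is_cond_ess_sup M G S (cond_ess_sup M G S)"
proof -
  define U where "U = {h \<in> borel_measurable G. \<forall>g\<in>S. AE \<omega> in M. g \<omega> \<le> h \<omega>}"
  have "(\<lambda>_. \<infinity>) \<in> U" unfolding U_def by auto
  moreover have "(\<lambda>\<omega>. INF n. u n \<omega>) \<in> U" if "\<forall>n::nat. u n \<in> U" for u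
  proof -
    have [measurable]: "\<And>n. u n \<in> borel_measurable G" using that unfolding U_def by auto
    have "AE \<omega> in M. g \<omega> \<le> (INF n. u n \<omega>)" if "g \<in> S" for g
    proof -
      have "\<forall>n. AE \<omega> in M. g \<omega> \<le> u n \<omega>" using \<open>\<forall>n. u n \<in> U\<close> \<open>g \<in> S\<close> unfolding U_def by auto
      then have "AE \<omega> in M. \<forall>n. g \<omega> \<le> u n \<omega>" by (simp add: AE_all_countable)
      then show ?thesis by eventually_elim (auto intro: INF_greatest)
    qed
    then show ?thesis unfolding U_def by auto
  qed
  ultimately obtain u where "u \<in> U" "\<forall>v\<in>U. AE \<omega> in M. u \<omega> \<le> v \<omega>"
    using AE_least_element_exists[of U] measurable_from_G unfolding U_def by blast
  then have "is_cond_ess_sup M G S u" unfolding is_cond_ess_sup_def U_def by auto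
  then show ?thesis unfolding cond_ess_sup_def by (rule someI[where P="is_cond_ess_sup M G S"])
qed

text \<open>Dually for infima, applied to the negated lower bounds.\<close>
lemma cond_ess_inf_spec: "is_cond_ess_inf M G S (cond_ess_inf M G S)"
proof -
  define U where "U = {h \<in> borel_measurable G. \<forall>g\<in>S. AE \<omega> in M. - h \<omega> \<le> g \<omega>}"
  have "(\<lambda>_. \<infinity>) \<in> U" unfolding U_def by auto
  moreover have "(\<lambda>\<omega>. INF n. u n \<omega>) \<in> U" if "\<forall>n::nat. u n \<in> U" for u
  proof -
    have [measurable]: "\<And>n. u n \<in> borel_measurable G" using that unfolding U_def by auto
    have "AE \<omega> in M. - (INF n. u n \<omega>) \<le> g \<omega>" if "g \<in> S" for g
    proof -
      have "\<forall>n. AE \<omega> in M. - u n \<omega> \<le> g \<omega>" using \<open>\<forall>n. u n \<in> U\<close> \<open>g \<in> S\<close> unfolding U_def by auto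
      then have "AE \<omega> in M. \<forall>n. - u n \<omega> \<le> g \<omega>" by (simp add: AE_all_countable)
      then show ?thesis
        by eventually_elim (auto simp: ereal_SUP_uminus_eq[symmetric] intro: SUP_least)
    qed
    then show ?thesis unfolding U_def by auto
  qed
  ultimately obtain u where uU: "u \<in> U" and u_least: "\<forall>v\<in>U. AE \<omega> in M. u \<omega> \<le> v \<omega>"
    using AE_least_element_exists[of U] measurable_from_G unfolding U_def by blast
  have "is_cond_ess_inf M G S (\<lambda>\<omega>. - u \<omega>)"
    unfolding is_cond_ess_inf_def
  proof (intro conjI ballI allI impI)
    show "(\<lambda>\<omega>. - u \<omega>) \<in> borel_measurable G" using uU unfolding U_def by auto
    show "AE \<omega> in M. - u \<omega> \<le> g \<omega>" if "g \<in> S" for g using uU that unfolding U_def by auto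
    fix h assume "h \<in> borel_measurable G" "\<forall>g\<in>S. AE \<omega> in M. h \<omega> \<le> g \<omega>"
    then have "(\<lambda>\<omega>. - h \<omega>) \<in> U" unfolding U_def by auto
    with u_least have "AE \<omega> in M. u \<omega> \<le> - h \<omega>" by auto
    then show "AE \<omega> in M. h \<omega> \<le> - u \<omega>"
      by eventually_elim (metis ereal_minus_le_minus ereal_uminus_uminus)
  qed
  then show ?thesis unfolding cond_ess_inf_def by (rule someI[where P="is_cond_ess_inf M G S"])
qed

lemma cond_ess_sup_measurable[measurable]: "cond_ess_sup M G S \<in> borel_measurable G"
  using cond_ess_sup_spec unfolding is_cond_ess_sup_def by auto

lemma cond_ess_sup_upper: "g \<in> S \<Longrightarrow> AE \<omega> in M. g \<omega> \<le> cond_ess_sup M G S \<omega>"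
  using cond_ess_sup_spec unfolding is_cond_ess_sup_def by auto

lemma cond_ess_sup_least:
  "h \<in> borel_measurable G \<Longrightarrow> (\<And>g. g \<in> S \<Longrightarrow> AE \<omega> in M. g \<omega> \<le> h \<omega>)
    \<Longrightarrow> AE \<omega> in M. cond_ess_sup M G S \<omega> \<le> h \<omega>"
  using cond_ess_sup_spec unfolding is_cond_ess_sup_def by auto

lemma cond_ess_inf_measurable[measurable]: "cond_ess_inf M G S \<in> borel_measurable G"
  using cond_ess_inf_spec unfolding is_cond_ess_inf_def by auto

lemma cond_ess_inf_lower: "g \<in> S \<Longrightarrow> AE \<omega> in M. cond_ess_inf M G S \<omega> \<le> g \<omega>"
  using cond_ess_inf_spec unfolding is_cond_ess_inf_def by auto

lemma cond_ess_inf_greatest: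
  "h \<in> borel_measurable G \<Longrightarrow> (\<And>g. g \<in> S \<Longrightarrow> AE \<omega> in M. h \<omega> \<le> g \<omega>)
    \<Longrightarrow> AE \<omega> in M. h \<omega> \<le> cond_ess_inf M G S \<omega>"
  using cond_ess_inf_spec unfolding is_cond_ess_inf_def by auto

end

section \<open>The generalised conditional expectation\<close>

lemma enn2real_add_finite:
  "a < top \<Longrightarrow> b < top \<Longrightarrow> enn2real (a + b) = enn2real a + enn2real (b::ennreal)"
  by (cases a rule: ennreal_cases; cases b rule: ennreal_cases) (auto simp flip: ennreal_plus)

lemma enn2ereal_diff_finite:
  "a < top \<Longrightarrow> b < top \<Longrightarrow> enn2ereal a - enn2ereal b = ereal (enn2real a - enn2real b)"
  by (cases a rule: ennreal_cases; cases b rule: ennreal_cases) auto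

lemma ennreal_decomposition_balance:
  assumes "w = u - v" "0 \<le> u" "0 \<le> (v::real)"
  shows "ennreal w + ennreal v = ennreal (- w) + ennreal u"
  using assms by (cases "0 \<le> w") (simp_all add: ennreal_neg flip: ennreal_plus)

lemma enn2real_diff_eq_if_sums_eq:
  assumes "a + v = b + u" "a < top" "b < top" "u < top" "v < (top::ennreal)"
  shows "enn2real a - enn2real b = enn2real u - enn2real v"
proof -
  have "enn2real (a + v) = enn2real (b + u)" using assms(1) by simp
  then show ?thesis using assms enn2real_add_finite[of a v] enn2real_add_finite[of b u] by simp
qed

lemma ennreal_weighted_parts:
  assumes "0 \<le> c" "0 \<le> d"
  shows "ennreal (c * max w 0 + d * max (- w) 0) = ennreal c * ennreal w + ennreal d * ennreal (- w)"
proof -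
  have "ennreal (c * max w 0) = ennreal c * ennreal w" using assms by (simp add: ennreal_mult)
  moreover have "ennreal (d * max (- w) 0) = ennreal d * ennreal (- w)"
    using assms by (simp add: ennreal_mult)
  ultimately show ?thesis using assms by (subst ennreal_plus) auto
qed

lemma enn2real_weighted_sum:
  "0 \<le> c \<Longrightarrow> 0 \<le> d \<Longrightarrow> a < top \<Longrightarrow> b < top \<Longrightarrow>
   enn2real (ennreal c * a + ennreal d * b) = c * enn2real a + d * enn2real b"
  by (cases a rule: ennreal_cases; cases b rule: ennreal_cases) (auto simp flip: ennreal_mult ennreal_plus)

context prob_subalgebra
begin

definition cond_integrable :: "('a \<Rightarrow> real) \<Rightarrow> bool" where
  "cond_integrable W \<longleftrightarrow>
     W \<in> borel_measurable M \<and> (AE x in M. nn_cond_exp M G (\<lambda>x. ennreal \<bar>W x\<bar>) x < top)"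

lemma cond_integrable_measurable: "cond_integrable W \<Longrightarrow> W \<in> borel_measurable M"
  unfolding cond_integrable_def by auto

lemma cexp_measurable_G[measurable]: "cexp M G W \<in> borel_measurable G"
  unfolding cexp_def by measurable

lemma cexp_measurable_M[measurable]: "cexp M G W \<in> borel_measurable M"
  by (rule measurable_from_G) (rule cexp_measurable_G)

lemma nn_cond_exp_G_measurable: "c \<in> borel_measurable G \<Longrightarrow> AE x in M. nn_cond_exp M G c x = c x"
  using subalg.nn_cond_exp_F_meas[of c] by auto

lemma nn_cond_exp_mono_pointwise:
  assumes "\<And>x. x \<in> space M \<Longrightarrow> f x \<le> g x" "f \<in> borel_measurable M" "g \<in> borel_measurable M"
  shows "AE x in M. nn_cond_exp M G f x \<le> nn_cond_exp M G g x"
  by (rule subalg.nn_cond_exp_mono) (use assms in auto)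

lemma nn_cond_exp_cong_pointwise:
  assumes "\<And>x. x \<in> space M \<Longrightarrow> f x = g x" "f \<in> borel_measurable M" "g \<in> borel_measurable M"
  shows "AE x in M. nn_cond_exp M G f x = nn_cond_exp M G g x"
  by (rule subalg.nn_cond_exp_cong) (use assms in auto)

lemma nn_cond_exp_finite_le:
  assumes "AE x in M. nn_cond_exp M G f x \<le> nn_cond_exp M G g x"
    and "AE x in M. nn_cond_exp M G g x < top"
  shows "AE x in M. nn_cond_exp M G f x < top"
  using assms by eventually_elim (auto dest: le_less_trans)

lemma nn_cond_exp_add_finite:
  assumes [measurable]: "f \<in> borel_measurable M" "g \<in> borel_measurable M"
    and "AE x in M. nn_cond_exp M G f x < top" "AE x in M. nn_cond_exp M G g x < top"
  shows "AE x in M. nn_cond_exp M G (\<lambda>x. f x + g x) x < top"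
  using subalg.nn_cond_exp_sum[OF assms(1,2)] assms(3,4)
  by eventually_elim (metis ennreal_add_less_top)

lemma nn_cond_exp_mult_finite:
  assumes [measurable]: "c \<in> borel_measurable G" "g \<in> borel_measurable M"
    and "\<And>x. c x < top" "AE x in M. nn_cond_exp M G g x < top"
  shows "AE x in M. nn_cond_exp M G (\<lambda>x. c x * g x) x < top"
  using subalg.nn_cond_exp_prod[OF assms(1,2)] assms(4)
  by eventually_elim (use assms(3) in \<open>metis ennreal_mult_less_top\<close>)

lemma nn_cond_exp_G_finite:
  assumes [measurable]: "c \<in> borel_measurable G" and "\<And>x. c x < top"
  shows "AE x in M. nn_cond_exp M G c x < top"
  using nn_cond_exp_G_measurable[OF assms(1)] by eventually_elim (use assms(2) in auto)

lemma cond_integrable_parts_finite: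
  assumes "cond_integrable W"
  shows "AE x in M. nn_cond_exp M G (\<lambda>x. ennreal (W x)) x < top
                  \<and> nn_cond_exp M G (\<lambda>x. ennreal (- W x)) x < top"
proof -
  have [measurable]: "W \<in> borel_measurable M" using assms by (rule cond_integrable_measurable)
  have "AE x in M. nn_cond_exp M G (\<lambda>x. ennreal (W x)) x \<le> nn_cond_exp M G (\<lambda>x. ennreal \<bar>W x\<bar>) x"
    by (rule nn_cond_exp_mono_pointwise) (auto intro: ennreal_leI)
  moreover have "AE x in M. nn_cond_exp M G (\<lambda>x. ennreal (- W x)) x
                   \<le> nn_cond_exp M G (\<lambda>x. ennreal \<bar>W x\<bar>) x"
    by (rule nn_cond_exp_mono_pointwise) (auto intro: ennreal_leI)
  moreover have "AE x in M. nn_cond_exp M G (\<lambda>x. ennreal \<bar>W x\<bar>) x < top"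
    using assms unfolding cond_integrable_def by auto
  ultimately show ?thesis by eventually_elim (auto dest: le_less_trans)
qed

lemma cexp_parts:
  assumes "cond_integrable W"
  shows "AE x in M. cexp M G W x = ereal (enn2real (nn_cond_exp M G (\<lambda>x. ennreal (W x)) x)
                                        - enn2real (nn_cond_exp M G (\<lambda>x. ennreal (- W x)) x))"
  using cond_integrable_parts_finite[OF assms]
  by eventually_elim (simp add: cexp_def enn2ereal_diff_finite)

lemma cexp_finite:
  assumes "cond_integrable W"
  shows "AE x in M. cexp M G W x = ereal (real_of_ereal (cexp M G W x))"
  using cexp_parts[OF assms] by eventually_elim simp

lemma cexp_difference:
  assumes [measurable]: "U \<in> borel_measurable M" "V \<in> borel_measurable M"
    and nn: "\<And>x. x \<in> space M \<Longrightarrow> 0 \<le> U x" "\<And>x. x \<in> space M \<Longrightarrow> 0 \<le> V x"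
    and fin_U: "AE x in M. nn_cond_exp M G (\<lambda>x. ennreal (U x)) x < top"
    and fin_V: "AE x in M. nn_cond_exp M G (\<lambda>x. ennreal (V x)) x < top"
    and W: "\<And>x. x \<in> space M \<Longrightarrow> W x = U x - V x"
  shows "cond_integrable W \<and>
    (AE x in M. cexp M G W x = ereal (enn2real (nn_cond_exp M G (\<lambda>x. ennreal (U x)) x)
                                      - enn2real (nn_cond_exp M G (\<lambda>x. ennreal (V x)) x)))"
proof -
  have [measurable]: "W \<in> borel_measurable M"
    by (rule measurable_cong[THEN iffD2, of _ _ "\<lambda>x. U x - V x"]) (use W in auto)
  have bound: "\<bar>W x\<bar> \<le> U x + V x" if "x \<in> space M" for x
    using W[OF that] nn[OF that] by simp
  have "AE x in M. nn_cond_exp M G (\<lambda>x. ennreal \<bar>W x\<bar>) x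
                   \<le> nn_cond_exp M G (\<lambda>x. ennreal (U x) + ennreal (V x)) x"
    by (rule nn_cond_exp_mono_pointwise)
       (use bound nn in \<open>auto simp flip: ennreal_plus intro!: ennreal_leI\<close>)
  moreover have "AE x in M. nn_cond_exp M G (\<lambda>x. ennreal (U x) + ennreal (V x)) x < top"
    by (rule nn_cond_exp_add_finite) (use fin_U fin_V in auto)
  ultimately have cW: "cond_integrable W"
    unfolding cond_integrable_def by (auto intro: nn_cond_exp_finite_le)
  have "AE x in M. nn_cond_exp M G (\<lambda>x. ennreal (W x)) x + nn_cond_exp M G (\<lambda>x. ennreal (V x)) x
                 = nn_cond_exp M G (\<lambda>x. ennreal (W x) + ennreal (V x)) x"
    by (rule subalg.nn_cond_exp_sum) auto
  moreover have "AE x in M. nn_cond_exp M G (\<lambda>x. ennreal (- W x)) x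
                     + nn_cond_exp M G (\<lambda>x. ennreal (U x)) x
                 = nn_cond_exp M G (\<lambda>x. ennreal (- W x) + ennreal (U x)) x"
    by (rule subalg.nn_cond_exp_sum) auto
  moreover have "AE x in M. nn_cond_exp M G (\<lambda>x. ennreal (W x) + ennreal (V x)) x
                 = nn_cond_exp M G (\<lambda>x. ennreal (- W x) + ennreal (U x)) x"
    by (rule nn_cond_exp_cong_pointwise) (use W nn ennreal_decomposition_balance in auto)
  moreover note cond_integrable_parts_finite[OF cW] fin_U fin_V cexp_parts[OF cW]
  ultimately have "AE x in M. cexp M G W x
      = ereal (enn2real (nn_cond_exp M G (\<lambda>x. ennreal (U x)) x)
               - enn2real (nn_cond_exp M G (\<lambda>x. ennreal (V x)) x))"
    by eventually_elim (simp add: enn2real_diff_eq_if_sums_eq)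
  with cW show ?thesis by simp
qed

lemma ennreal_positive_parts_sum: "ennreal (max a 0 + max b 0) = ennreal a + ennreal b"
  by (subst ennreal_plus) auto

text \<open>Additivity: decompose U + V into the sums of the positive and of the negative parts.\<close>
lemma cexp_add:
  assumes cU: "cond_integrable U" and cV: "cond_integrable V"
  shows "cond_integrable (\<lambda>x. U x + V x) \<and>
    (AE x in M. cexp M G (\<lambda>x. U x + V x) x = cexp M G U x + cexp M G V x)"
proof -
  have [measurable]: "U \<in> borel_measurable M" "V \<in> borel_measurable M"
    using cU cV by (auto simp: cond_integrable_def)
  have parts_sum: "AE x in M. nn_cond_exp M G (\<lambda>x. ennreal (max (f x) 0 + max (g x) 0)) x
      = nn_cond_exp M G (\<lambda>x. ennreal (f x)) x + nn_cond_exp M G (\<lambda>x. ennreal (g x)) x"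
    if [measurable]: "f \<in> borel_measurable M" "g \<in> borel_measurable M" for f g
  proof -
    have "AE x in M. nn_cond_exp M G (\<lambda>x. ennreal (max (f x) 0 + max (g x) 0)) x
        = nn_cond_exp M G (\<lambda>x. ennreal (f x) + ennreal (g x)) x"
      by (rule nn_cond_exp_cong_pointwise) (auto simp: ennreal_positive_parts_sum)
    moreover have "AE x in M. nn_cond_exp M G (\<lambda>x. ennreal (f x)) x + nn_cond_exp M G (\<lambda>x. ennreal (g x)) x
        = nn_cond_exp M G (\<lambda>x. ennreal (f x) + ennreal (g x)) x"
      by (rule subalg.nn_cond_exp_sum) auto
    ultimately show ?thesis by eventually_elim simp
  qed
  define U' where "U' = (\<lambda>x. max (U x) 0 + max (V x) 0)"
  define V' where "V' = (\<lambda>x. max (- U x) 0 + max (- V x) 0)"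
  have eU: "AE x in M. nn_cond_exp M G (\<lambda>x. ennreal (U' x)) x
      = nn_cond_exp M G (\<lambda>x. ennreal (U x)) x + nn_cond_exp M G (\<lambda>x. ennreal (V x)) x"
    unfolding U'_def by (rule parts_sum) auto
  have eV: "AE x in M. nn_cond_exp M G (\<lambda>x. ennreal (V' x)) x
      = nn_cond_exp M G (\<lambda>x. ennreal (- U x)) x + nn_cond_exp M G (\<lambda>x. ennreal (- V x)) x"
    unfolding V'_def by (rule parts_sum) auto
  note parts = cond_integrable_parts_finite[OF cU] cond_integrable_parts_finite[OF cV]
  have fin_U': "AE x in M. nn_cond_exp M G (\<lambda>x. ennreal (U' x)) x < top"
    using eU parts by eventually_elim simp
  have fin_V': "AE x in M. nn_cond_exp M G (\<lambda>x. ennreal (V' x)) x < top"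
    using eV parts by eventually_elim simp
  have D: "cond_integrable (\<lambda>x. U x + V x) \<and>
    (AE x in M. cexp M G (\<lambda>x. U x + V x) x
       = ereal (enn2real (nn_cond_exp M G (\<lambda>x. ennreal (U' x)) x)
                - enn2real (nn_cond_exp M G (\<lambda>x. ennreal (V' x)) x)))"
    by (rule cexp_difference) (use fin_U' fin_V' in \<open>auto simp: U'_def V'_def\<close>)
  have "AE x in M. cexp M G (\<lambda>x. U x + V x) x = cexp M G U x + cexp M G V x"
    using conjunct2[OF D] eU eV parts cexp_parts[OF cU] cexp_parts[OF cV]
    by eventually_elim (simp add: enn2real_add_finite)
  with D show ?thesis by simp
qed

lemma nn_cond_exp_weighted_parts:
  assumes [measurable]: "c \<in> borel_measurable G" "d \<in> borel_measurable G" "W \<in> borel_measurable M"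
    and nn: "\<And>x. 0 \<le> c x" "\<And>x. 0 \<le> d x"
  shows "AE x in M. nn_cond_exp M G (\<lambda>x. ennreal (c x * max (W x) 0 + d x * max (- W x) 0)) x
      = ennreal (c x) * nn_cond_exp M G (\<lambda>x. ennreal (W x)) x
        + ennreal (d x) * nn_cond_exp M G (\<lambda>x. ennreal (- W x)) x"
proof -
  have [measurable]: "c \<in> borel_measurable M" "d \<in> borel_measurable M" by (auto intro: measurable_from_G)
  have "AE x in M. nn_cond_exp M G (\<lambda>x. ennreal (c x * max (W x) 0 + d x * max (- W x) 0)) x
      = nn_cond_exp M G (\<lambda>x. ennreal (c x) * ennreal (W x) + ennreal (d x) * ennreal (- W x)) x"
    by (rule nn_cond_exp_cong_pointwise) (auto simp: ennreal_weighted_parts[OF nn])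
  moreover have "AE x in M. nn_cond_exp M G (\<lambda>x. ennreal (c x) * ennreal (W x)) x
        + nn_cond_exp M G (\<lambda>x. ennreal (d x) * ennreal (- W x)) x
      = nn_cond_exp M G (\<lambda>x. ennreal (c x) * ennreal (W x) + ennreal (d x) * ennreal (- W x)) x"
    by (rule subalg.nn_cond_exp_sum) auto
  moreover have "AE x in M. ennreal (c x) * nn_cond_exp M G (\<lambda>x. ennreal (W x)) x
      = nn_cond_exp M G (\<lambda>x. ennreal (c x) * ennreal (W x)) x"
    by (rule subalg.nn_cond_exp_prod) auto
  moreover have "AE x in M. ennreal (d x) * nn_cond_exp M G (\<lambda>x. ennreal (- W x)) x
      = nn_cond_exp M G (\<lambda>x. ennreal (d x) * ennreal (- W x)) x"
    by (rule subalg.nn_cond_exp_prod) auto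
  ultimately show ?thesis by eventually_elim simp
qed

lemma cexp_mult_G:
  assumes cW: "cond_integrable W" and l[measurable]: "l \<in> borel_measurable G"
  shows "cond_integrable (\<lambda>x. l x * W x) \<and>
    (AE x in M. cexp M G (\<lambda>x. l x * W x) x = ereal (l x) * cexp M G W x)"
proof -
  have [measurable]: "W \<in> borel_measurable M" using cW by (rule cond_integrable_measurable)
  have [measurable]: "l \<in> borel_measurable M" by (rule measurable_from_G) (rule l)
  define lp where "lp = (\<lambda>x. max (l x) 0)"
  define lm where "lm = (\<lambda>x. max (- l x) 0)"
  have [measurable]: "lp \<in> borel_measurable G" "lm \<in> borel_measurable G" unfolding lp_def lm_def by auto
  have [measurable]: "lp \<in> borel_measurable M" "lm \<in> borel_measurable M"
    by (auto intro: measurable_from_G)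
  define a where "a = nn_cond_exp M G (\<lambda>x. ennreal (W x))"
  define b where "b = nn_cond_exp M G (\<lambda>x. ennreal (- W x))"
  have k1: "AE x in M. nn_cond_exp M G (\<lambda>x. ennreal (lp x * max (W x) 0 + lm x * max (- W x) 0)) x
               = ennreal (lp x) * a x + ennreal (lm x) * b x"
    unfolding a_def b_def by (rule nn_cond_exp_weighted_parts) (auto simp: lp_def lm_def)
  have k2: "AE x in M. nn_cond_exp M G (\<lambda>x. ennreal (lp x * max (- W x) 0 + lm x * max (W x) 0)) x
               = ennreal (lp x) * b x + ennreal (lm x) * a x"
    unfolding a_def b_def using nn_cond_exp_weighted_parts[of lp lm "\<lambda>x. - W x"]
    by (simp add: lp_def lm_def)
  have fin: "AE x in M. a x < top \<and> b x < top"
    using cond_integrable_parts_finite[OF cW] unfolding a_def b_def .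
  have f1: "AE x in M. nn_cond_exp M G (\<lambda>x. ennreal (lp x * max (W x) 0 + lm x * max (- W x) 0)) x < top"
    using k1 fin by eventually_elim (simp add: ennreal_mult_less_top)
  have f2: "AE x in M. nn_cond_exp M G (\<lambda>x. ennreal (lp x * max (- W x) 0 + lm x * max (W x) 0)) x < top"
    using k2 fin by eventually_elim (simp add: ennreal_mult_less_top)
  have D: "cond_integrable (\<lambda>x. l x * W x) \<and> (AE x in M. cexp M G (\<lambda>x. l x * W x) x =
      ereal (enn2real (nn_cond_exp M G (\<lambda>x. ennreal (lp x * max (W x) 0 + lm x * max (- W x) 0)) x)
           - enn2real (nn_cond_exp M G (\<lambda>x. ennreal (lp x * max (- W x) 0 + lm x * max (W x) 0)) x)))"
    by (rule cexp_difference) (use f1 f2 in \<open>auto simp: lp_def lm_def max_def algebra_simps\<close>)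
  have "AE x in M. cexp M G (\<lambda>x. l x * W x) x = ereal (l x) * cexp M G W x"
    using conjunct2[OF D] k1 k2 fin cexp_parts[OF cW]
  proof eventually_elim
    case (elim x)
    have lx: "l x = lp x - lm x" and nn: "0 \<le> lp x" "0 \<le> lm x"
      unfolding lp_def lm_def by (auto simp: max_def)
    have "enn2real (ennreal (lp x) * a x + ennreal (lm x) * b x)
        = lp x * enn2real (a x) + lm x * enn2real (b x)"
      using elim nn by (simp add: enn2real_weighted_sum)
    moreover have "enn2real (ennreal (lp x) * b x + ennreal (lm x) * a x)
        = lp x * enn2real (b x) + lm x * enn2real (a x)"
      using elim nn by (simp add: enn2real_weighted_sum)
    moreover have "(lp x * enn2real (a x) + lm x * enn2real (b x))
        - (lp x * enn2real (b x) + lm x * enn2real (a x)) = l x * (enn2real (a x) - enn2real (b x))"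
      unfolding lx by (simp add: algebra_simps)
    ultimately show ?case using elim by (simp add: a_def[symmetric] b_def[symmetric])
  qed
  with D show ?thesis by simp
qed

lemma cexp_add_scaled:
  assumes cU: "cond_integrable U" and cV: "cond_integrable V" and [measurable]: "l \<in> borel_measurable G"
  shows "AE x in M. cexp M G (\<lambda>x. U x + l x * V x) x = cexp M G U x + ereal (l x) * cexp M G V x"
proof -
  have S: "cond_integrable (\<lambda>x. l x * V x) \<and>
      (AE x in M. cexp M G (\<lambda>x. l x * V x) x = ereal (l x) * cexp M G V x)"
    by (rule cexp_mult_G[OF cV]) simp
  have "AE x in M. cexp M G (\<lambda>x. U x + l x * V x) x = cexp M G U x + cexp M G (\<lambda>x. l x * V x) x"
    using cexp_add[OF cU conjunct1[OF S]] by (rule conjunct2)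
  with conjunct2[OF S] show ?thesis by eventually_elim simp
qed

lemma cexp_cong:
  assumes "AE x in M. W1 x = W2 x" "W1 \<in> borel_measurable M" "W2 \<in> borel_measurable M"
  shows "AE x in M. cexp M G W1 x = cexp M G W2 x"
proof -
  have [measurable]: "W1 \<in> borel_measurable M" "W2 \<in> borel_measurable M" by fact+
  have "AE x in M. nn_cond_exp M G (\<lambda>x. ennreal (W1 x)) x = nn_cond_exp M G (\<lambda>x. ennreal (W2 x)) x"
    by (rule subalg.nn_cond_exp_cong) (use assms(1) in auto)
  moreover have "AE x in M. nn_cond_exp M G (\<lambda>x. ennreal (- W1 x)) x
                   = nn_cond_exp M G (\<lambda>x. ennreal (- W2 x)) x"
    by (rule subalg.nn_cond_exp_cong) (use assms(1) in auto)
  ultimately show ?thesis by eventually_elim (simp add: cexp_def zero_ennreal.rep_eq)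
qed

lemma cexp_cong_pointwise:
  assumes "\<And>x. x \<in> space M \<Longrightarrow> W1 x = W2 x" "W1 \<in> borel_measurable M" "W2 \<in> borel_measurable M"
  shows "AE x in M. cexp M G W1 x = cexp M G W2 x"
  by (rule cexp_cong) (use assms in auto)

lemma cexp_uminus:
  assumes c: "cond_integrable W"
  shows "AE x in M. cexp M G (\<lambda>x. - W x) x = - cexp M G W x"
proof -
  have S: "AE x in M. cexp M G (\<lambda>x. (\<lambda>_. -1) x * W x) x = ereal ((\<lambda>_. -1) x) * cexp M G W x"
    by (rule conjunct2[OF cexp_mult_G[OF c]]) simp
  have "ereal (- 1) * c = - c" for c by (cases c) auto
  then show ?thesis using S by simp
qed

lemma nn_cond_exp_zero: "AE x in M. nn_cond_exp M G (\<lambda>_. 0) x = 0"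
  using nn_cond_exp_G_measurable[of "\<lambda>_. 0"] by simp

lemma cexp_zero: "AE x in M. cexp M G (\<lambda>_. 0) x = 0"
  using nn_cond_exp_zero by eventually_elim (simp add: cexp_def zero_ennreal.rep_eq)

lemma cexp_nonneg:
  assumes [measurable]: "W \<in> borel_measurable M" and nn: "\<And>x. x \<in> space M \<Longrightarrow> 0 \<le> W x"
  shows "AE x in M. cexp M G W x = enn2ereal (nn_cond_exp M G (\<lambda>x. ennreal (W x)) x)"
proof -
  have "AE x in M. nn_cond_exp M G (\<lambda>x. ennreal (- W x)) x = nn_cond_exp M G (\<lambda>x. 0) x"
    by (rule nn_cond_exp_cong_pointwise) (use nn in \<open>auto simp: ennreal_neg\<close>)
  with nn_cond_exp_zero show ?thesis
    by eventually_elim (simp add: cexp_def zero_ennreal.rep_eq)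
qed

lemma AE_zero_where_nn_cond_exp_zero:
  assumes [measurable]: "f \<in> borel_measurable M"
  shows "AE x in M. nn_cond_exp M G f x = 0 \<longrightarrow> f x = 0"
proof -
  define B where "B = {x \<in> space M. nn_cond_exp M G f x = 0}"
  have B_G: "B \<in> sets G" unfolding B_def space_G[symmetric] by measurable
  then have [measurable]: "B \<in> sets M" by (rule sets_G_in_M)
  have "(\<integral>\<^sup>+ x. indicator B x * nn_cond_exp M G f x \<partial>M) = (\<integral>\<^sup>+ x. indicator B x * f x \<partial>M)"
    by (rule subalg.nn_cond_exp_intg) (use B_G in auto)
  moreover have "(\<integral>\<^sup>+ x. indicator B x * nn_cond_exp M G f x \<partial>M) = 0"
    by (rule nn_integral_0_iff_AE[THEN iffD2]) (auto simp: B_def indicator_def)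
  ultimately have "(\<integral>\<^sup>+ x. indicator B x * f x \<partial>M) = 0" by simp
  then have "AE x in M. indicator B x * f x = 0" by (subst (asm) nn_integral_0_iff_AE) auto
  then show ?thesis using AE_space by eventually_elim (auto simp: B_def indicator_def)
qed

lemma cexp_local_zero:
  assumes cW: "cond_integrable W" and B: "B \<in> sets G" and z: "AE x in M. x \<in> B \<longrightarrow> W x = 0"
  shows "AE x in M. x \<in> B \<longrightarrow> cexp M G W x = 0"
proof -
  have [measurable]: "W \<in> borel_measurable M" using cW by (rule cond_integrable_measurable)
  have [measurable]: "B \<in> sets G" "B \<in> sets M" using B sets_G_in_M by auto
  have S: "AE x in M. cexp M G (\<lambda>x. indicator B x * W x) x = ereal (indicator B x) * cexp M G W x"
    using cexp_mult_G[OF cW, of "indicator B"] by simp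
  have "AE x in M. cexp M G (\<lambda>x. indicator B x * W x) x = cexp M G (\<lambda>_. 0) x"
    by (rule cexp_cong) (use z in \<open>auto simp: indicator_def\<close>)
  then show ?thesis using S cexp_zero by eventually_elim (simp add: indicator_def)
qed

lemma zero_if_cexp_multiples_bounded:
  assumes cW: "cond_integrable W" and nn: "\<And>x. 0 \<le> W x"
    and cA: "cond_integrable A" and cB: "cond_integrable B"
    and bound: "\<And>k::nat. AE x in M. cexp M G A x < cexp M G B x - ereal (real k) * cexp M G W x"
  shows "AE x in M. W x = 0"
proof -
  have [measurable]: "W \<in> borel_measurable M" using cW by (rule cond_integrable_measurable)
  have "AE x in M. \<forall>k::nat. cexp M G A x < cexp M G B x - ereal (real k) * cexp M G W x"
    using bound by (simp add: AE_all_countable)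
  moreover have "AE x in M. cexp M G W x = enn2ereal (nn_cond_exp M G (\<lambda>x. ennreal (W x)) x)"
    by (rule cexp_nonneg) (use nn in auto)
  ultimately have "AE x in M. nn_cond_exp M G (\<lambda>x. ennreal (W x)) x = 0"
    using cexp_finite[OF cA] cexp_finite[OF cB] cexp_finite[OF cW]
  proof eventually_elim
    case (elim x)
    obtain a b c where abc: "cexp M G A x = ereal a" "cexp M G B x = ereal b" "cexp M G W x = ereal c"
      using elim by metis
    have c0: "0 \<le> c" using elim(2) abc(3) by (metis enn2ereal_nonneg ereal_less_eq(5))
    have lt: "a < b - real k * c" for k :: nat using elim(1) abc by (simp add: spec[of _ k])
    have "c = 0"
    proof (rule ccontr)
      assume "c \<noteq> 0"
      then have "0 < c" using c0 by simp
      obtain k :: nat where "(b - a) / c < real k" using reals_Archimedean2 by blast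
      then have "b - a < real k * c" using \<open>0 < c\<close> by (simp add: divide_less_eq mult.commute)
      then show False using lt[of k] by simp
    qed
    then have "enn2ereal (nn_cond_exp M G (\<lambda>x. ennreal (W x)) x) = 0"
      using elim(2) abc(3) by (simp add: zero_ereal_def)
    then show ?case by (simp add: zero_ennreal.rep_eq[symmetric] enn2ereal_inject)
  qed
  moreover have "AE x in M. nn_cond_exp M G (\<lambda>x. ennreal (W x)) x = 0 \<longrightarrow> ennreal (W x) = 0"
    by (rule AE_zero_where_nn_cond_exp_zero) simp
  ultimately show ?thesis by eventually_elim (metis nn antisym ennreal_eq_0_iff)
qed

lemma cond_integrable_bound_mult:
  assumes cW: "cond_integrable W" and [measurable]: "V \<in> borel_measurable M" "g \<in> borel_measurable G"
    and b: "AE x in M. \<bar>V x\<bar> \<le> g x"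
  shows "cond_integrable (\<lambda>x. V x * W x)"
proof -
  have [measurable]: "W \<in> borel_measurable M" using cW by (rule cond_integrable_measurable)
  have [measurable]: "g \<in> borel_measurable M" by (rule measurable_from_G) simp
  have "AE x in M. nn_cond_exp M G (\<lambda>x. ennreal \<bar>V x * W x\<bar>) x
                   \<le> nn_cond_exp M G (\<lambda>x. ennreal (g x) * ennreal \<bar>W x\<bar>) x"
  proof (rule subalg.nn_cond_exp_mono)
    show "AE x in M. ennreal \<bar>V x * W x\<bar> \<le> ennreal (g x) * ennreal \<bar>W x\<bar>"
      using b proof eventually_elim
      case (elim x)
      then have "\<bar>V x * W x\<bar> \<le> g x * \<bar>W x\<bar>" by (simp add: abs_mult mult_right_mono)
      moreover have "0 \<le> g x" using elim by linarith
      ultimately show ?case by (simp add: ennreal_mult[symmetric] ennreal_leI)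
    qed
  qed auto
  moreover have "AE x in M. nn_cond_exp M G (\<lambda>x. ennreal (g x) * ennreal \<bar>W x\<bar>) x < top"
    by (rule nn_cond_exp_mult_finite) (use cW in \<open>auto simp: cond_integrable_def\<close>)
  ultimately show ?thesis unfolding cond_integrable_def by (auto intro: nn_cond_exp_finite_le)
qed

lemma cond_integrable_abs_cong:
  assumes "cond_integrable W" "V \<in> borel_measurable M" "\<And>x. \<bar>V x\<bar> = \<bar>W x\<bar>"
  shows "cond_integrable V"
  using assms unfolding cond_integrable_def by simp

end

section \<open>Conditional L^p spaces\<close>

lemma conj_exp_cases:
  assumes "1 \<le> p"
  obtains (one) "p = 1" "conj_exp p = \<infinity>"
    | (inf) "p = \<infinity>" "conj_exp p = 1"
    | (fin) r where "p = ereal r" "1 < r" "conj_exp p = ereal (r / (r - 1))"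
proof (cases p)
  case (real r)
  show ?thesis
  proof (cases "r = 1")
    case True then show ?thesis using real one by (simp add: conj_exp_def)
  next
    case False
    then have "1 < r" using assms real by auto
    have "ereal r - 1 = ereal (r - 1)" by (simp add: one_ereal_def)
    then show ?thesis using real fin[of r] False \<open>1 < r\<close> by (simp add: conj_exp_def)
  qed
next
  case PInf then show ?thesis using inf by (simp add: conj_exp_def)
next
  case MInf then show ?thesis using assms by simp
qed

lemma conj_exp_ge1: "1 \<le> p \<Longrightarrow> 1 \<le> conj_exp p"
  by (cases rule: conj_exp_cases[of p]) auto

lemma young_simple:
  fixes a b r :: real
  assumes "1 < r" "0 \<le> a" "0 \<le> b"
  shows "a * b \<le> a powr r + b powr (r / (r - 1))"
proof -
  define q where "q = r / (r - 1)"
  have q1: "1 < q" unfolding q_def using assms(1) by (simp add: less_divide_eq)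
  have "1 / q = (r - 1) / r" unfolding q_def by simp
  then have q2: "1 / r + 1 / q = 1" using assms(1) by (simp add: diff_divide_distrib)
  have div_le: "0 \<le> (x::real) \<Longrightarrow> 1 \<le> c \<Longrightarrow> x / c \<le> x" for x c
    by (metis div_by_1 frac_le less_eq_real_def zero_less_one)
  have "a * b \<le> a powr r / r + b powr q / q" by (rule Youngs_inequality) (use assms q1 q2 in auto)
  also have "\<dots> \<le> a powr r + b powr q" using assms q1 by (intro add_mono div_le) auto
  finally show ?thesis unfolding q_def .
qed

lemma powr_sum_bound:
  fixes a b k r :: real
  assumes "\<bar>b\<bar> \<le> k" "0 < r"
  shows "\<bar>a + b\<bar> powr r \<le> 2 powr r * (\<bar>a\<bar> powr r + k powr r)"
proof -
  define m where "m = max \<bar>a\<bar> k"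
  have k0: "0 \<le> k" using assms(1) by linarith
  have "\<bar>a + b\<bar> \<le> 2 * m" unfolding m_def using assms(1) by (auto simp: max_def)
  then have "\<bar>a + b\<bar> powr r \<le> (2 * m) powr r" using assms(2) by (intro powr_mono2) auto
  also have "\<dots> = 2 powr r * m powr r" using k0 unfolding m_def by (subst powr_mult) auto
  also have "m powr r \<le> \<bar>a\<bar> powr r + k powr r" unfolding m_def by (auto simp: max_def)
  then have "2 powr r * m powr r \<le> 2 powr r * (\<bar>a\<bar> powr r + k powr r)" by (intro mult_left_mono) auto
  finally show ?thesis .
qed

context prob_subalgebra
begin

lemma LpG_measurable: "X \<in> LpG M G p \<Longrightarrow> X \<in> borel_measurable M"
  unfolding LpG_def by auto

lemma LpG_inf_bound:
  assumes "X \<in> LpG M G \<infinity>"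
  obtains g where "g \<in> borel_measurable G" "\<And>x. 0 \<le> g x" "AE x in M. \<bar>X x\<bar> \<le> g x"
proof -
  define S where "S = {Y. Y \<in> borel_measurable G \<and> (AE x in M. ereal \<bar>X x\<bar> \<le> Y x)}"
  have fin: "AE x in M. cond_ess_inf M G S x < \<infinity>" using assms unfolding LpG_def S_def by auto
  have "(\<lambda>_. \<infinity>) \<in> S" unfolding S_def by auto
  moreover have "(\<lambda>\<omega>. INF n. u n \<omega>) \<in> S" if "\<forall>n::nat. u n \<in> S" for u
  proof -
    have [measurable]: "\<And>n. u n \<in> borel_measurable G" using that unfolding S_def by auto
    have "\<forall>n. AE x in M. ereal \<bar>X x\<bar> \<le> u n x" using that unfolding S_def by auto
    then have "AE x in M. \<forall>n. ereal \<bar>X x\<bar> \<le> u n x" by (simp add: AE_all_countable)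
    then have "AE x in M. ereal \<bar>X x\<bar> \<le> (INF n. u n x)" by eventually_elim (auto intro: INF_greatest)
    then show ?thesis unfolding S_def by auto
  qed
  ultimately obtain u where uS: "u \<in> S" and u_least: "\<forall>v\<in>S. AE x in M. u x \<le> v x"
    using AE_least_element_exists[of S] measurable_from_G unfolding S_def by blast
  have [measurable]: "u \<in> borel_measurable G" using uS unfolding S_def by auto
  have "AE x in M. u x \<le> cond_ess_inf M G S x"
    using u_least by (intro cond_ess_inf_greatest) auto
  moreover have "AE x in M. ereal \<bar>X x\<bar> \<le> u x" using uS unfolding S_def by auto
  ultimately have bound: "AE x in M. ereal \<bar>X x\<bar> \<le> u x \<and> u x < \<infinity>"
    using fin by eventually_elim auto
  define g where "g = (\<lambda>x. max (real_of_ereal (u x)) 0)"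
  have "g \<in> borel_measurable G" unfolding g_def by measurable
  moreover have "\<And>x. 0 \<le> g x" unfolding g_def by auto
  moreover have "AE x in M. \<bar>X x\<bar> \<le> g x"
    using bound proof eventually_elim
    case (elim x)
    then show ?case unfolding g_def by (cases "u x") auto
  qed
  ultimately show ?thesis by (rule that)
qed

lemma LpG_inf_intro:
  assumes [measurable]: "X \<in> borel_measurable M" and g[measurable]: "g \<in> borel_measurable G"
    and b: "AE x in M. \<bar>X x\<bar> \<le> g x"
  shows "X \<in> LpG M G \<infinity>"
proof -
  define S where "S = {Y. Y \<in> borel_measurable G \<and> (AE x in M. ereal \<bar>X x\<bar> \<le> Y x)}"
  have "(\<lambda>x. ereal (g x)) \<in> S" unfolding S_def using b by auto
  then have "AE x in M. cond_ess_inf M G S x \<le> ereal (g x)" by (rule cond_ess_inf_lower)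
  then have "AE x in M. cond_ess_inf M G S x < \<infinity>" by eventually_elim (auto dest: le_less_trans)
  then show ?thesis unfolding LpG_def S_def by auto
qed

lemma cond_integrable_LpG:
  assumes X: "X \<in> LpG M G r" and r: "1 \<le> r"
  shows "cond_integrable X"
proof -
  have [measurable]: "X \<in> borel_measurable M" using X by (rule LpG_measurable)
  show ?thesis
  proof (cases "r = \<infinity>")
    case True
    then obtain g where [measurable]: "g \<in> borel_measurable G" and g: "AE x in M. \<bar>X x\<bar> \<le> g x"
      using LpG_inf_bound X by metis
    have [measurable]: "g \<in> borel_measurable M" by (rule measurable_from_G) simp
    have "AE x in M. nn_cond_exp M G (\<lambda>x. ennreal \<bar>X x\<bar>) x \<le> nn_cond_exp M G (\<lambda>x. ennreal (g x)) x"
      by (rule subalg.nn_cond_exp_mono) (use g in \<open>auto intro: ennreal_leI\<close>)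
    moreover have "AE x in M. nn_cond_exp M G (\<lambda>x. ennreal (g x)) x < top"
      by (rule nn_cond_exp_G_finite) auto
    ultimately show ?thesis unfolding cond_integrable_def by (auto intro: nn_cond_exp_finite_le)
  next
    case False
    define rr where "rr = real_of_ereal r"
    have rr: "1 \<le> rr" using r False unfolding rr_def by (cases r) auto
    have fin: "AE x in M. nn_cond_exp M G (\<lambda>x. ennreal (\<bar>X x\<bar> powr rr)) x < top"
      using X False unfolding LpG_def rr_def by auto
    have pw: "\<bar>y\<bar> \<le> 1 + \<bar>y\<bar> powr rr" for y :: real
    proof (cases "\<bar>y\<bar> \<le> 1")
      case False
      then have "\<bar>y\<bar> powr 1 \<le> \<bar>y\<bar> powr rr" using rr by (intro powr_mono) auto
      then show ?thesis by simp
    qed (smt (verit) powr_ge_zero)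
    have "AE x in M. nn_cond_exp M G (\<lambda>x. ennreal \<bar>X x\<bar>) x
        \<le> nn_cond_exp M G (\<lambda>x. ennreal 1 + ennreal (\<bar>X x\<bar> powr rr)) x"
    proof (rule nn_cond_exp_mono_pointwise)
      fix x show "ennreal \<bar>X x\<bar> \<le> ennreal 1 + ennreal (\<bar>X x\<bar> powr rr)"
        using ennreal_leI[OF pw[of "X x"]] by (subst ennreal_plus[symmetric]) auto
    qed auto
    moreover have "AE x in M. nn_cond_exp M G (\<lambda>x. ennreal 1 + ennreal (\<bar>X x\<bar> powr rr)) x < top"
      by (rule nn_cond_exp_add_finite) (use fin nn_cond_exp_G_finite[of "\<lambda>_. ennreal 1"] in auto)
    ultimately show ?thesis unfolding cond_integrable_def by (auto intro: nn_cond_exp_finite_le)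
  qed
qed

lemma cond_integrable_LpG_product:
  assumes X: "X \<in> LpG M G p" and Z: "Z \<in> LpG M G (conj_exp p)" and p: "1 \<le> p"
  shows "cond_integrable (\<lambda>x. Z x * X x)"
proof -
  have [measurable]: "X \<in> borel_measurable M" "Z \<in> borel_measurable M"
    using X Z by (auto intro: LpG_measurable)
  from p show ?thesis
  proof (cases rule: conj_exp_cases)
    case one
    obtain g where "g \<in> borel_measurable G" "AE x in M. \<bar>Z x\<bar> \<le> g x"
      using LpG_inf_bound[of Z] Z one by auto
    then show ?thesis using cond_integrable_LpG[OF X p] by (intro cond_integrable_bound_mult) auto
  next
    case inf
    obtain g where "g \<in> borel_measurable G" "AE x in M. \<bar>X x\<bar> \<le> g x"
      using LpG_inf_bound[of X] X inf by auto
    moreover have "cond_integrable Z" using cond_integrable_LpG[OF Z conj_exp_ge1[OF p]] .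
    ultimately have "cond_integrable (\<lambda>x. X x * Z x)" by (intro cond_integrable_bound_mult) auto
    then show ?thesis by (simp add: mult.commute)
  next
    case (fin r)
    have fin_X: "AE x in M. nn_cond_exp M G (\<lambda>x. ennreal (\<bar>X x\<bar> powr r)) x < top"
      using X fin unfolding LpG_def by auto
    have fin_Z: "AE x in M. nn_cond_exp M G (\<lambda>x. ennreal (\<bar>Z x\<bar> powr (r / (r - 1)))) x < top"
      using Z fin unfolding LpG_def by auto
    have "AE x in M. nn_cond_exp M G (\<lambda>x. ennreal \<bar>Z x * X x\<bar>) x \<le>
        nn_cond_exp M G (\<lambda>x. ennreal (\<bar>X x\<bar> powr r) + ennreal (\<bar>Z x\<bar> powr (r / (r - 1)))) x"
    proof (rule nn_cond_exp_mono_pointwise)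
      fix x
      have young: "\<bar>Z x * X x\<bar> \<le> \<bar>X x\<bar> powr r + \<bar>Z x\<bar> powr (r / (r - 1))"
        using young_simple[of r "\<bar>X x\<bar>" "\<bar>Z x\<bar>"] fin by (simp add: abs_mult mult.commute)
      show "ennreal \<bar>Z x * X x\<bar> \<le> ennreal (\<bar>X x\<bar> powr r) + ennreal (\<bar>Z x\<bar> powr (r / (r - 1)))"
        using ennreal_leI[OF young] by (subst ennreal_plus[symmetric]) auto
    qed auto
    moreover have "AE x in M. nn_cond_exp M G
        (\<lambda>x. ennreal (\<bar>X x\<bar> powr r) + ennreal (\<bar>Z x\<bar> powr (r / (r - 1)))) x < top"
      by (rule nn_cond_exp_add_finite) (use fin_X fin_Z in auto)
    ultimately show ?thesis unfolding cond_integrable_def by (auto intro: nn_cond_exp_finite_le)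
  qed
qed

lemma LpG_add_bounded:
  assumes \<xi>: "\<xi> \<in> LpG M G p" and p: "1 \<le> p" and [measurable]: "B \<in> borel_measurable M"
    and [measurable]: "K \<in> borel_measurable G" and bound: "\<And>x. x \<in> space M \<Longrightarrow> \<bar>B x\<bar> \<le> K x"
  shows "(\<lambda>x. \<xi> x + B x) \<in> LpG M G p"
proof -
  have [measurable]: "\<xi> \<in> borel_measurable M" using \<xi> by (rule LpG_measurable)
  have [measurable]: "K \<in> borel_measurable M" by (rule measurable_from_G) simp
  show ?thesis
  proof (cases "p = \<infinity>")
    case True
    then obtain g where [measurable]: "g \<in> borel_measurable G" and g: "AE x in M. \<bar>\<xi> x\<bar> \<le> g x"
      using LpG_inf_bound[of \<xi>] \<xi> by auto
    have "AE x in M. \<bar>\<xi> x + B x\<bar> \<le> g x + K x"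
      using g AE_space
      by eventually_elim (use bound in \<open>auto intro: order_trans[OF abs_triangle_ineq] add_mono\<close>)
    then show ?thesis unfolding True by (intro LpG_inf_intro) auto
  next
    case False
    define r where "r = real_of_ereal p"
    have r: "1 \<le> r" using p False unfolding r_def by (cases p) auto
    have fin: "AE x in M. nn_cond_exp M G (\<lambda>x. ennreal (\<bar>\<xi> x\<bar> powr r)) x < top"
      using \<xi> False unfolding LpG_def r_def by auto
    have "AE x in M. nn_cond_exp M G (\<lambda>x. ennreal (\<bar>\<xi> x + B x\<bar> powr r)) x \<le>
        nn_cond_exp M G (\<lambda>x. ennreal (2 powr r) * (ennreal (\<bar>\<xi> x\<bar> powr r) + ennreal (K x powr r))) x"
    proof (rule nn_cond_exp_mono_pointwise)
      fix x assume x: "x \<in> space M"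
      have "\<bar>\<xi> x + B x\<bar> powr r \<le> 2 powr r * (\<bar>\<xi> x\<bar> powr r + K x powr r)"
        using powr_sum_bound[OF bound[OF x], of r "\<xi> x"] r by simp
      then show "ennreal (\<bar>\<xi> x + B x\<bar> powr r)
          \<le> ennreal (2 powr r) * (ennreal (\<bar>\<xi> x\<bar> powr r) + ennreal (K x powr r))"
        by (subst ennreal_plus[symmetric], simp, simp, subst ennreal_mult[symmetric])
           (auto intro: ennreal_leI)
    qed auto
    moreover have "AE x in M. nn_cond_exp M G
        (\<lambda>x. ennreal (2 powr r) * (ennreal (\<bar>\<xi> x\<bar> powr r) + ennreal (K x powr r))) x < top"
    proof (rule nn_cond_exp_mult_finite)
      show "AE x in M. nn_cond_exp M G (\<lambda>x. ennreal (\<bar>\<xi> x\<bar> powr r) + ennreal (K x powr r)) x < top"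
        by (rule nn_cond_exp_add_finite) (use fin nn_cond_exp_G_finite in auto)
    qed auto
    ultimately show ?thesis using False unfolding LpG_def r_def by (auto intro: nn_cond_exp_finite_le)
  qed
qed

lemma LpG_add_G:
  assumes "\<xi> \<in> LpG M G p" "1 \<le> p" and [measurable]: "L \<in> borel_measurable G"
  shows "(\<lambda>x. \<xi> x + L x) \<in> LpG M G p"
  by (rule LpG_add_bounded[OF assms(1,2), of L "\<lambda>x. \<bar>L x\<bar>"]) (auto intro: measurable_from_G)

lemma LpG_mult_G:
  assumes Z: "Z \<in> LpG M G p" and p: "1 \<le> p" and [measurable]: "c \<in> borel_measurable G"
  shows "(\<lambda>x. c x * Z x) \<in> LpG M G p"
proof -
  have [measurable]: "Z \<in> borel_measurable M" using Z by (rule LpG_measurable)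
  have [measurable]: "c \<in> borel_measurable M" by (rule measurable_from_G) simp
  show ?thesis
  proof (cases "p = \<infinity>")
    case True
    then obtain g where [measurable]: "g \<in> borel_measurable G" and g: "AE x in M. \<bar>Z x\<bar> \<le> g x"
      using LpG_inf_bound[of Z] Z by auto
    have "AE x in M. \<bar>c x * Z x\<bar> \<le> \<bar>c x\<bar> * g x"
      using g by eventually_elim (auto simp: abs_mult intro: mult_left_mono)
    then show ?thesis unfolding True by (intro LpG_inf_intro) auto
  next
    case False
    define r where "r = real_of_ereal p"
    have fin: "AE x in M. nn_cond_exp M G (\<lambda>x. ennreal (\<bar>Z x\<bar> powr r)) x < top"
      using Z False unfolding LpG_def r_def by auto
    have "AE x in M. nn_cond_exp M G (\<lambda>x. ennreal (\<bar>c x * Z x\<bar> powr r)) x =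
        nn_cond_exp M G (\<lambda>x. ennreal (\<bar>c x\<bar> powr r) * ennreal (\<bar>Z x\<bar> powr r)) x"
      by (rule nn_cond_exp_cong_pointwise) (auto simp: abs_mult powr_mult ennreal_mult)
    moreover have "AE x in M. nn_cond_exp M G
        (\<lambda>x. ennreal (\<bar>c x\<bar> powr r) * ennreal (\<bar>Z x\<bar> powr r)) x < top"
      by (rule nn_cond_exp_mult_finite) (use fin in auto)
    ultimately show ?thesis using False unfolding LpG_def r_def by auto
  qed
qed

lemma LpG_cong:
  assumes X: "X \<in> LpG M G p" and [measurable]: "W \<in> borel_measurable M" and eq: "AE x in M. W x = X x"
  shows "W \<in> LpG M G p"
proof -
  have [measurable]: "X \<in> borel_measurable M" using X by (rule LpG_measurable)
  show ?thesis
  proof (cases "p = \<infinity>")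
    case True
    then obtain g where [measurable]: "g \<in> borel_measurable G" and g: "AE x in M. \<bar>X x\<bar> \<le> g x"
      using LpG_inf_bound[of X] X by auto
    have "AE x in M. \<bar>W x\<bar> \<le> g x" using g eq by eventually_elim auto
    then show ?thesis unfolding True by (intro LpG_inf_intro) auto
  next
    case False
    have "AE x in M. nn_cond_exp M G (\<lambda>x. ennreal (\<bar>W x\<bar> powr real_of_ereal p)) x
        = nn_cond_exp M G (\<lambda>x. ennreal (\<bar>X x\<bar> powr real_of_ereal p)) x"
      by (rule subalg.nn_cond_exp_cong) (use eq in auto)
    then show ?thesis using X False unfolding LpG_def by auto
  qed
qed

end

definition sublevel ::
  "'a measure \<Rightarrow> 'a measure \<Rightarrow> ereal \<Rightarrow> (('a \<Rightarrow> real) \<Rightarrow> ('a \<Rightarrow> real)) \<Rightarrow> ('a \<Rightarrow> real) \<Rightarrow> ('a \<Rightarrow> real) set"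
  where "sublevel M G p \<rho> Y = {\<xi> \<in> LpG M G p. AE \<omega> in M. \<rho> \<xi> \<omega> \<le> Y \<omega>}"

definition normalized_density :: "'a measure \<Rightarrow> 'a measure \<Rightarrow> ('a \<Rightarrow> real) \<Rightarrow> ('a \<Rightarrow> real)" where
  "normalized_density M G Z = (\<lambda>x. Z x / real_of_ereal (cexp M G Z x))"

lemma ereal_diff_le_swap: "s \<le> ereal y - t \<Longrightarrow> t \<le> ereal y - s"
  by (cases s; cases t) auto

lemma ereal_diff_le_real: "ereal y - ereal r \<le> s \<Longrightarrow> ereal y - s \<le> ereal r"
  by (cases s) auto

lemma ereal_real_diff_le: "t \<le> ereal a \<Longrightarrow> ereal (y - a) \<le> ereal y - t"
  by (cases t) auto

lemma ereal_uminus_mult_left: "ereal (- l) * c = - (ereal l * c)"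
  by (cases c) auto

context prob_subalgebra
begin

text \<open>A nonpositive Z whose pairings with two functions are strictly ordered has a strictly
  negative conditional expectation: on the G-event where E[Z|G] vanishes Z is zero, so both
  pairings vanish there.\<close>
lemma cexp_neg_if_nonpos_separating:
  assumes Z_le: "AE x in M. Z x \<le> 0"
    and cU: "cond_integrable (\<lambda>x. Z x * U x)" and cV: "cond_integrable (\<lambda>x. Z x * V x)"
    and sep: "AE x in M. cexp M G (\<lambda>x. Z x * U x) x < cexp M G (\<lambda>x. Z x * V x) x"
    and [measurable]: "Z \<in> borel_measurable M"
  shows "AE x in M. cexp M G Z x < 0"
proof -
  define N where "N = nn_cond_exp M G (\<lambda>x. ennreal (- Z x))"
  have "AE x in M. nn_cond_exp M G (\<lambda>x. ennreal (Z x)) x = nn_cond_exp M G (\<lambda>_. 0) x"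
    by (rule subalg.nn_cond_exp_cong) (use Z_le in \<open>auto simp: ennreal_neg elim: eventually_mono\<close>)
  with nn_cond_exp_zero have cexp_Z: "AE x in M. cexp M G Z x = - enn2ereal (N x)"
    by eventually_elim (simp add: cexp_def N_def zero_ennreal.rep_eq)
  define B where "B = {x \<in> space M. N x = 0}"
  have B_G: "B \<in> sets G" unfolding B_def space_G[symmetric] N_def by measurable
  have "AE x in M. N x = 0 \<longrightarrow> ennreal (- Z x) = 0"
    unfolding N_def by (rule AE_zero_where_nn_cond_exp_zero) simp
  then have Z_zero_on_B: "AE x in M. x \<in> B \<longrightarrow> Z x = 0"
    using Z_le by eventually_elim (auto simp: B_def ennreal_eq_0_iff)
  have "AE x in M. x \<in> B \<longrightarrow> cexp M G (\<lambda>x. Z x * U x) x = 0"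
    by (rule cexp_local_zero[OF cU B_G]) (use Z_zero_on_B in \<open>auto elim: eventually_mono\<close>)
  moreover have "AE x in M. x \<in> B \<longrightarrow> cexp M G (\<lambda>x. Z x * V x) x = 0"
    by (rule cexp_local_zero[OF cV B_G]) (use Z_zero_on_B in \<open>auto elim: eventually_mono\<close>)
  ultimately have "AE x in M. N x \<noteq> 0"
    using sep AE_space by eventually_elim (auto simp: B_def)
  with cexp_Z show ?thesis
  proof eventually_elim
    case (elim x)
    have "enn2ereal (N x) \<noteq> 0" using elim(2) by (metis enn2ereal_inject zero_ennreal.rep_eq)
    then have "0 < enn2ereal (N x)" using enn2ereal_nonneg[of "N x"] by (simp add: order.strict_iff_order)
    then show ?case using elim(1) by (metis ereal_minus_less_minus ereal_uminus_zero)
  qed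
qed

lemma normalized_density_PqG:
  assumes Z: "Z \<in> LpG M G q" and q: "1 \<le> q"
    and Z_le: "AE x in M. Z x \<le> 0" and neg: "AE x in M. cexp M G Z x < 0"
  shows "normalized_density M G Z \<in> PqG M G q"
proof -
  have cZ: "cond_integrable Z" by (rule cond_integrable_LpG[OF Z q])
  define c where "c = (\<lambda>x. real_of_ereal (cexp M G Z x))"
  have [measurable]: "c \<in> borel_measurable G" unfolding c_def by measurable
  have c: "AE x in M. cexp M G Z x = ereal (c x) \<and> c x < 0"
    using cexp_finite[OF cZ] neg unfolding c_def
  proof eventually_elim
    case (elim x)
    then show ?case by (cases "cexp M G Z x") auto
  qed
  have Q_eq: "normalized_density M G Z = (\<lambda>x. (1 / c x) * Z x)"
    unfolding normalized_density_def c_def by auto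
  have "(\<lambda>x. (1 / c x) * Z x) \<in> LpG M G q" by (rule LpG_mult_G[OF Z q]) simp
  moreover have "AE x in M. 0 \<le> (1 / c x) * Z x"
    using c Z_le by eventually_elim (auto intro: divide_nonpos_neg)
  moreover have "AE x in M. cexp M G (\<lambda>x. (1 / c x) * Z x) x = ereal (1 / c x) * cexp M G Z x"
    by (rule conjunct2[OF cexp_mult_G[OF cZ]]) simp
  then have "AE x in M. cexp M G (\<lambda>x. (1 / c x) * Z x) x = 1"
    using c by eventually_elim auto
  ultimately show ?thesis unfolding PqG_def Q_eq by auto
qed

lemma cexp_normalized_density:
  assumes cZW: "cond_integrable (\<lambda>x. Z x * W x)"
  shows "AE x in M. cexp M G (\<lambda>x. normalized_density M G Z x * W x) x
           = ereal (1 / real_of_ereal (cexp M G Z x)) * cexp M G (\<lambda>x. Z x * W x) x"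
proof -
  define c where "c = (\<lambda>x. real_of_ereal (cexp M G Z x))"
  have [measurable]: "c \<in> borel_measurable G" unfolding c_def by measurable
  have [measurable]: "(\<lambda>x. Z x * W x) \<in> borel_measurable M" using cZW by (rule cond_integrable_measurable)
  have "AE x in M. cexp M G (\<lambda>x. normalized_density M G Z x * W x) x
          = cexp M G (\<lambda>x. (1 / c x) * (Z x * W x)) x"
    by (rule cexp_cong_pointwise) (auto simp: normalized_density_def c_def measurable_from_G)
  moreover have "AE x in M. cexp M G (\<lambda>x. (1 / c x) * (Z x * W x)) x
                   = ereal (1 / c x) * cexp M G (\<lambda>x. Z x * W x) x"
    by (rule conjunct2[OF cexp_mult_G[OF cZW]]) simp
  ultimately show ?thesis unfolding c_def by eventually_elim simp
qed

end

locale cond_risk_functional = prob_subalgebra M G for M :: "'a measure" and G +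
  fixes p :: ereal and \<rho> :: "('a \<Rightarrow> real) \<Rightarrow> ('a \<Rightarrow> real)"
  assumes p: "1 \<le> p" and wd: "well_defined_ae M G p \<rho>"
begin

lemma rho_measurable_G: "\<xi> \<in> LpG M G p \<Longrightarrow> \<rho> \<xi> \<in> borel_measurable G"
  using wd unfolding well_defined_ae_def by auto

lemma rho_cong:
  "\<xi> \<in> LpG M G p \<Longrightarrow> \<eta> \<in> LpG M G p \<Longrightarrow> AE x in M. \<xi> x = \<eta> x \<Longrightarrow> AE x in M. \<rho> \<xi> x = \<rho> \<eta> x"
  using wd unfolding well_defined_ae_def by auto

lemma cond_integrable_pairing:
  assumes "Z \<in> LpG M G (conj_exp p)" "\<eta> \<in> LpG M G p"
  shows "cond_integrable (\<lambda>x. Z x * - \<eta> x)"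
proof -
  have [measurable]: "Z \<in> borel_measurable M" "\<eta> \<in> borel_measurable M"
    using assms by (auto intro: LpG_measurable)
  show ?thesis
    by (rule cond_integrable_abs_cong[OF cond_integrable_LpG_product[OF assms(2,1) p]]) (auto simp: abs_mult)
qed

lemma pairing_finite:
  "Z \<in> LpG M G (conj_exp p) \<Longrightarrow> \<eta> \<in> LpG M G p \<Longrightarrow>
    AE x in M. cexp M G (\<lambda>x. Z x * - \<eta> x) x = ereal (real_of_ereal (cexp M G (\<lambda>x. Z x * - \<eta> x) x))"
  by (rule cexp_finite[OF cond_integrable_pairing])

lemma pairing_shift:
  assumes Z: "Z \<in> LpG M G (conj_exp p)" and \<eta>: "\<eta> \<in> LpG M G p" and [measurable]: "L \<in> borel_measurable G"
  shows "AE x in M. cexp M G (\<lambda>x. Z x * - (\<eta> x + L x)) x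
                     = cexp M G (\<lambda>x. Z x * - \<eta> x) x - ereal (L x) * cexp M G Z x"
proof -
  have cZ: "cond_integrable Z" by (rule cond_integrable_LpG[OF Z conj_exp_ge1[OF p]])
  have [measurable]: "Z \<in> borel_measurable M" "\<eta> \<in> borel_measurable M"
    using Z \<eta> by (auto intro: LpG_measurable)
  have [measurable]: "L \<in> borel_measurable M" by (rule measurable_from_G) simp
  have "AE x in M. cexp M G (\<lambda>x. Z x * - (\<eta> x + L x)) x = cexp M G (\<lambda>x. Z x * - \<eta> x + - L x * Z x) x"
    by (rule cexp_cong_pointwise) (auto simp: algebra_simps measurable_from_G)
  moreover have "AE x in M. cexp M G (\<lambda>x. Z x * - \<eta> x + - L x * Z x) x
                   = cexp M G (\<lambda>x. Z x * - \<eta> x) x + ereal (- L x) * cexp M G Z x"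
    by (rule cexp_add_scaled[OF cond_integrable_pairing[OF Z \<eta>] cZ]) simp
  ultimately show ?thesis by eventually_elim (simp add: minus_ereal_def ereal_uminus_mult_left)
qed

lemma rho_star_measurable[measurable]: "rho_star M G p \<rho> Z \<in> borel_measurable G"
  unfolding rho_star_def by measurable

lemma fenchel_inequality:
  "\<eta> \<in> LpG M G p \<Longrightarrow>
    AE \<omega> in M. cexp M G (\<lambda>x. Z x * - \<eta> x) \<omega> - ereal (\<rho> \<eta> \<omega>) \<le> rho_star M G p \<rho> Z \<omega>"
  unfolding rho_star_def by (rule cond_ess_sup_upper) auto

lemma rho_star_least:
  assumes "h \<in> borel_measurable G"
    and "\<And>\<eta>. \<eta> \<in> LpG M G p \<Longrightarrow> AE \<omega> in M. cexp M G (\<lambda>x. Z x * - \<eta> x) \<omega> - ereal (\<rho> \<eta> \<omega>) \<le> h \<omega>"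
  shows "AE \<omega> in M. rho_star M G p \<rho> Z \<omega> \<le> h \<omega>"
  unfolding rho_star_def by (rule cond_ess_sup_least) (use assms in auto)

lemma PqG_LpG: "Z \<in> PqG M G q \<Longrightarrow> Z \<in> LpG M G q"
  unfolding PqG_def by auto

subsection \<open>Part (i): the minimal risk at a given expected loss\<close>

lemma R_fun_lower:
  assumes Z: "Z \<in> LpG M G (conj_exp p)" and X: "X \<in> LpG M G p"
  defines "Y \<equiv> cexp M G (\<lambda>x. Z x * - X x)"
  shows "AE \<omega> in M. Y \<omega> - rho_star M G p \<rho> Z \<omega> \<le> R_fun M G p \<rho> Y Z \<omega>"
  unfolding R_fun_def
proof (rule cond_ess_inf_greatest)
  show "(\<lambda>\<omega>. Y \<omega> - rho_star M G p \<rho> Z \<omega>) \<in> borel_measurable G" unfolding Y_def by measurable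
  fix g assume "g \<in> (\<lambda>\<xi> \<omega>. ereal (\<rho> \<xi> \<omega>)) `
      {\<xi> \<in> LpG M G p. AE \<omega> in M. cexp M G (\<lambda>x. Z x * - \<xi> x) \<omega> = Y \<omega>}"
  then obtain \<xi> where \<xi>: "\<xi> \<in> LpG M G p" "AE \<omega> in M. cexp M G (\<lambda>x. Z x * - \<xi> x) \<omega> = Y \<omega>"
    and g: "g = (\<lambda>\<omega>. ereal (\<rho> \<xi> \<omega>))" by auto
  show "AE \<omega> in M. Y \<omega> - rho_star M G p \<rho> Z \<omega> \<le> g \<omega>"
    using fenchel_inequality[OF \<xi>(1), of Z] \<xi>(2) pairing_finite[OF Z X] unfolding g Y_def
    by eventually_elim (metis ereal_diff_le_real)
qed

text \<open>Upper bound: shifting any \<eta> by the cash amount E_Q[-\<eta>|G] - Y produces a position with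
  expected loss Y, whose risk is rho(\<eta>) minus that amount by cash additivity.\<close>
lemma R_fun_upper:
  assumes cas: "CAS M G p \<rho>" and Q: "Q \<in> PqG M G (conj_exp p)" and X: "X \<in> LpG M G p"
  defines "Y \<equiv> cexp M G (\<lambda>x. Q x * - X x)"
  shows "AE \<omega> in M. rho_star M G p \<rho> Q \<omega> \<le> Y \<omega> - R_fun M G p \<rho> Y Q \<omega>"
proof (rule rho_star_least)
  have Q_L: "Q \<in> LpG M G (conj_exp p)" using Q by (rule PqG_LpG)
  have Q_1: "AE x in M. cexp M G Q x = 1" using Q unfolding PqG_def by auto
  show "(\<lambda>\<omega>. Y \<omega> - R_fun M G p \<rho> Y Q \<omega>) \<in> borel_measurable G"
    unfolding Y_def R_fun_def by measurable
  fix \<eta> assume \<eta>: "\<eta> \<in> LpG M G p"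
  define F where "F = cexp M G (\<lambda>x. Q x * - \<eta> x)"
  define L where "L = (\<lambda>x. real_of_ereal (F x) - real_of_ereal (Y x))"
  have [measurable]: "L \<in> borel_measurable G" unfolding L_def F_def Y_def by measurable
  define \<xi> where "\<xi> = (\<lambda>x. \<eta> x + L x)"
  have \<xi>: "\<xi> \<in> LpG M G p" unfolding \<xi>_def by (rule LpG_add_G[OF \<eta> p]) simp
  note fin = pairing_finite[OF Q_L \<eta>, folded F_def] pairing_finite[OF Q_L X, folded Y_def]
  have shift: "AE x in M. cexp M G (\<lambda>x. Q x * - (\<eta> x + L x)) x = F x - ereal (L x) * cexp M G Q x"
    unfolding F_def by (rule pairing_shift[OF Q_L \<eta>]) simp
  have "AE x in M. cexp M G (\<lambda>x. Q x * - \<xi> x) x = Y x"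
    using shift Q_1 fin unfolding \<xi>_def
  proof eventually_elim
    case (elim x)
    obtain f y where "F x = ereal f" "Y x = ereal y" using elim(3,4) by metis
    then show ?case using elim(1,2) by (simp add: L_def)
  qed
  then have "AE \<omega> in M. R_fun M G p \<rho> Y Q \<omega> \<le> ereal (\<rho> \<xi> \<omega>)"
    unfolding R_fun_def using \<xi> by (intro cond_ess_inf_lower) auto
  moreover have "AE \<omega> in M. \<rho> \<xi> \<omega> = \<rho> \<eta> \<omega> - L \<omega>"
    using cas \<eta> unfolding CAS_def \<xi>_def by auto
  ultimately show "AE \<omega> in M. F \<omega> - ereal (\<rho> \<eta> \<omega>) \<le> Y \<omega> - R_fun M G p \<rho> Y Q \<omega>"
    using fin
  proof eventually_elim
    case (elim x)
    obtain f y where fy: "F x = ereal f" "Y x = ereal y" using elim(3,4) by metis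
    then have "R_fun M G p \<rho> Y Q x \<le> ereal (\<rho> \<eta> x - (f - y))"
      using elim(1,2) unfolding L_def by simp
    from ereal_real_diff_le[OF this, of y] show ?case using fy by simp
  qed
qed

theorem minimal_risk_representation:
  assumes cas: "CAS M G p \<rho>" and Q: "Q \<in> PqG M G (conj_exp p)" and X: "X \<in> LpG M G p"
  shows "AE \<omega> in M. R_fun M G p \<rho> (cexp M G (\<lambda>x. Q x * - X x)) Q \<omega>
                 = cexp M G (\<lambda>x. Q x * - X x) \<omega> - rho_star M G p \<rho> Q \<omega>"
  using R_fun_lower[OF PqG_LpG[OF Q] X] R_fun_upper[OF cas Q X] pairing_finite[OF PqG_LpG[OF Q] X]
  by eventually_elim (metis ereal_diff_le_swap antisym)

subsection \<open>Part (ii): the dual representation\<close>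

lemma locality:
  assumes reg: "REG M G p \<rho>" and \<xi>: "\<xi> \<in> LpG M G p" and X: "X \<in> LpG M G p"
    and B: "B \<in> sets G" and eq: "AE \<omega> in M. \<omega> \<in> B \<longrightarrow> X \<omega> = \<xi> \<omega>"
  shows "AE \<omega> in M. \<omega> \<in> B \<longrightarrow> \<rho> \<xi> \<omega> = \<rho> X \<omega>"
proof -
  have [measurable]: "\<xi> \<in> borel_measurable M" "X \<in> borel_measurable M"
    using \<xi> X by (auto intro: LpG_measurable)
  have [measurable]: "B \<in> sets M" using B by (rule sets_G_in_M)
  define W where "W = (\<lambda>x. \<xi> x * indicator B x + X x * indicator (space M - B) x)"
  have [measurable]: "W \<in> borel_measurable M" unfolding W_def by measurable
  have WX: "AE x in M. W x = X x" using eq AE_space by eventually_elim (auto simp: W_def indicator_def)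
  have "W \<in> LpG M G p" by (rule LpG_cong[OF X]) (use WX in auto)
  then have "AE x in M. \<rho> W x = \<rho> X x" by (rule rho_cong[OF _ X WX])
  moreover have "AE x in M. \<rho> W x = \<rho> \<xi> x * indicator B x + \<rho> X x * indicator (space M - B) x"
    using reg \<xi> X B unfolding REG_def W_def by auto
  ultimately show ?thesis by eventually_elim (auto simp: indicator_def)
qed

lemma sublevel_upward_closed:
  assumes mon: "MON_dec M G p \<rho>" and \<xi>: "\<xi> \<in> sublevel M G p \<rho> Y" and \<eta>: "\<eta> \<in> LpG M G p"
    and le: "AE \<omega> in M. \<xi> \<omega> \<le> \<eta> \<omega>"
  shows "\<eta> \<in> sublevel M G p \<rho> Y"
proof -
  have "AE \<omega> in M. \<rho> \<eta> \<omega> \<le> \<rho> \<xi> \<omega>" using mon \<xi> \<eta> le unfolding MON_dec_def sublevel_def by auto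
  with \<xi> \<eta> show ?thesis unfolding sublevel_def by (auto elim: eventually_mono[OF eventually_conj])
qed

lemma sublevel_agrees_only_on_null:
  assumes reg: "REG M G p \<rho>" and X: "X \<in> LpG M G p" and \<epsilon>: "0 < \<epsilon>"
    and \<xi>: "\<xi> \<in> sublevel M G p \<rho> (\<lambda>\<omega>. \<rho> X \<omega> - \<epsilon>)"
    and A: "A \<in> sets G" and eq: "AE \<omega> in M. \<omega> \<in> A \<longrightarrow> X \<omega> = \<xi> \<omega>"
  shows "AE \<omega> in M. \<omega> \<notin> A"
proof -
  have \<xi>_L: "\<xi> \<in> LpG M G p" and \<xi>_le: "AE \<omega> in M. \<rho> \<xi> \<omega> \<le> \<rho> X \<omega> - \<epsilon>"
    using \<xi> unfolding sublevel_def by auto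
  show ?thesis using locality[OF reg \<xi>_L X A eq] \<xi>_le by eventually_elim (use \<epsilon> in auto)
qed

lemma sublevel_A_C_empty:
  assumes reg: "REG M G p \<rho>" and cas: "CAS M G p \<rho>" and X: "X \<in> LpG M G p" and \<epsilon>: "0 < \<epsilon>"
  shows "is_A_C M G p (sublevel M G p \<rho> (\<lambda>\<omega>. \<rho> X \<omega> - \<epsilon>)) {}"
  unfolding is_A_C_def
proof (intro conjI allI impI)
  have "(\<lambda>x. X x + \<epsilon>) \<in> LpG M G p" using LpG_add_G[OF X p, of "\<lambda>_. \<epsilon>"] by simp
  moreover have "AE \<omega> in M. \<rho> (\<lambda>x. X x + \<epsilon>) \<omega> = \<rho> X \<omega> - \<epsilon>"
    using cas X unfolding CAS_def by auto
  ultimately have "(\<lambda>x. X x + \<epsilon>) \<in> sublevel M G p \<rho> (\<lambda>\<omega>. \<rho> X \<omega> - \<epsilon>)"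
    unfolding sublevel_def by auto
  then show "full_on M G p (sublevel M G p \<rho> (\<lambda>\<omega>. \<rho> X \<omega> - \<epsilon>)) {}"
    unfolding full_on_def by auto
next
  fix B assume "full_on M G p (sublevel M G p \<rho> (\<lambda>\<omega>. \<rho> X \<omega> - \<epsilon>)) B"
  then obtain \<xi> where B: "B \<in> sets G" and \<xi>: "\<xi> \<in> sublevel M G p \<rho> (\<lambda>\<omega>. \<rho> X \<omega> - \<epsilon>)"
    and eq: "AE \<omega> in M. \<omega> \<in> B \<longrightarrow> X \<omega> = \<xi> \<omega>"
    using X unfolding full_on_def by blast
  show "AE \<omega> in M. \<omega> \<in> B \<longrightarrow> \<omega> \<in> {}"
    using sublevel_agrees_only_on_null[OF reg X \<epsilon> \<xi> B eq] by auto
qed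

lemma outside_sublevel:
  assumes reg: "REG M G p \<rho>" and X: "X \<in> LpG M G p" and \<epsilon>: "0 < \<epsilon>"
  shows "outside M G (sublevel M G p \<rho> (\<lambda>\<omega>. \<rho> X \<omega> - \<epsilon>)) (space M - {}) X"
  unfolding outside_def
proof
  assume "\<exists>A\<in>sets G. A \<subseteq> space M - {} \<and> measure M A > 0 \<and>
     (\<exists>\<xi>\<in>sublevel M G p \<rho> (\<lambda>\<omega>. \<rho> X \<omega> - \<epsilon>). AE \<omega> in M. \<omega> \<in> A \<longrightarrow> X \<omega> = \<xi> \<omega>)"
  then obtain A \<xi> where A: "A \<in> sets G" "A \<subseteq> space M" "measure M A > 0"
    and \<xi>: "\<xi> \<in> sublevel M G p \<rho> (\<lambda>\<omega>. \<rho> X \<omega> - \<epsilon>)" and eq: "AE \<omega> in M. \<omega> \<in> A \<longrightarrow> X \<omega> = \<xi> \<omega>"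
    by auto
  have "AE \<omega> in M. \<omega> \<notin> A" by (rule sublevel_agrees_only_on_null[OF reg X \<epsilon> \<xi> A(1) eq])
  then have "emeasure M A = 0"
    using A sets_G_in_M by (subst (asm) AE_iff_measurable[of A]) auto
  then show False using A(3) by (simp add: measure_def)
qed

lemma separating_density:
  assumes reg: "REG M G p \<rho>" and evq: "EVQ M G p \<rho>" and cas: "CAS M G p \<rho>"
    and X: "X \<in> LpG M G p" and \<epsilon>: "0 < \<epsilon>"
  obtains Z where "Z \<in> LpG M G (conj_exp p)"
    and "\<And>\<xi>. \<xi> \<in> sublevel M G p \<rho> (\<lambda>\<omega>. \<rho> X \<omega> - \<epsilon>) \<Longrightarrow>
           AE \<omega> in M. cexp M G (\<lambda>x. Z x * - X x) \<omega> < cexp M G (\<lambda>x. Z x * - \<xi> x) \<omega>"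
proof -
  define C where "C = sublevel M G p \<rho> (\<lambda>\<omega>. \<rho> X \<omega> - \<epsilon>)"
  have [measurable]: "\<rho> X \<in> borel_measurable G" using X by (rule rho_measurable_G)
  have "cond_evenly_convex M G p C" using evq unfolding EVQ_def C_def sublevel_def by auto
  then have "\<forall>AC. is_A_C M G p C AC \<longrightarrow> (\<forall>X\<in>LpG M G p. outside M G C (space M - AC) X \<longrightarrow>
      (\<exists>Z\<in>LpG M G (conj_exp p). \<forall>\<xi>\<in>C. AE \<omega> in M. \<omega> \<in> space M - AC \<longrightarrow>
         cexp M G (\<lambda>x. Z x * X x) \<omega> > cexp M G (\<lambda>x. Z x * \<xi> x) \<omega>))"
    unfolding cond_evenly_convex_def by (rule conjunct2)
  then have "\<exists>Z\<in>LpG M G (conj_exp p). \<forall>\<xi>\<in>C. AE \<omega> in M. \<omega> \<in> space M - {} \<longrightarrow>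
      cexp M G (\<lambda>x. Z x * X x) \<omega> > cexp M G (\<lambda>x. Z x * \<xi> x) \<omega>"
    using sublevel_A_C_empty[OF reg cas X \<epsilon>] outside_sublevel[OF reg X \<epsilon>] X unfolding C_def by blast
  then obtain Z where Z: "Z \<in> LpG M G (conj_exp p)" and sep: "\<And>\<xi>. \<xi> \<in> C \<Longrightarrow>
      AE \<omega> in M. \<omega> \<in> space M - {} \<longrightarrow> cexp M G (\<lambda>x. Z x * \<xi> x) \<omega> < cexp M G (\<lambda>x. Z x * X x) \<omega>"
    by blast
  have flip: "AE x in M. cexp M G (\<lambda>x. Z x * - \<eta> x) x = - cexp M G (\<lambda>x. Z x * \<eta> x) x"
    if "\<eta> \<in> LpG M G p" for \<eta>
  proof -
    have cZ\<eta>: "cond_integrable (\<lambda>x. Z x * \<eta> x)" by (rule cond_integrable_LpG_product[OF that Z p])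
    have [measurable]: "Z \<in> borel_measurable M" "\<eta> \<in> borel_measurable M"
      using Z that by (auto intro: LpG_measurable)
    have "AE x in M. cexp M G (\<lambda>x. Z x * - \<eta> x) x = cexp M G (\<lambda>x. - (Z x * \<eta> x)) x"
      by (rule cexp_cong_pointwise) auto
    with cexp_uminus[OF cZ\<eta>] show ?thesis by eventually_elim simp
  qed
  show ?thesis
  proof (rule that[OF Z])
    fix \<xi> assume "\<xi> \<in> sublevel M G p \<rho> (\<lambda>\<omega>. \<rho> X \<omega> - \<epsilon>)"
    then have "\<xi> \<in> C" "\<xi> \<in> LpG M G p" unfolding C_def sublevel_def by auto
    show "AE \<omega> in M. cexp M G (\<lambda>x. Z x * - X x) \<omega> < cexp M G (\<lambda>x. Z x * - \<xi> x) \<omega>"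
      using sep[OF \<open>\<xi> \<in> C\<close>] flip[OF X] flip[OF \<open>\<xi> \<in> LpG M G p\<close>] AE_space
      by eventually_elim (simp add: ereal_uminus_less_reorder)
  qed
qed

text \<open>A density separating X from a sublevel set is nonpositive: by monotonicity the sublevel
  set contains \<xi>0 + k on {Z > 0} for every k, which forces E[Z^+|G] = 0.\<close>
lemma separating_density_nonpos:
  assumes mon: "MON_dec M G p \<rho>" and Z: "Z \<in> LpG M G (conj_exp p)" and X: "X \<in> LpG M G p"
    and \<xi>0: "\<xi>0 \<in> sublevel M G p \<rho> Y"
    and sep: "\<And>\<xi>. \<xi> \<in> sublevel M G p \<rho> Y \<Longrightarrow>
           AE \<omega> in M. cexp M G (\<lambda>x. Z x * - X x) \<omega> < cexp M G (\<lambda>x. Z x * - \<xi> x) \<omega>"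
  shows "AE \<omega> in M. Z \<omega> \<le> 0"
proof -
  have \<xi>0_L: "\<xi>0 \<in> LpG M G p" using \<xi>0 unfolding sublevel_def by auto
  have [measurable]: "Z \<in> borel_measurable M" "\<xi>0 \<in> borel_measurable M"
    using Z \<xi>0_L by (auto intro: LpG_measurable)
  have cZ: "cond_integrable Z" by (rule cond_integrable_LpG[OF Z conj_exp_ge1[OF p]])
  define F where "F = {x \<in> space M. 0 < Z x}"
  have [measurable]: "F \<in> sets M" unfolding F_def by measurable
  define W where "W = (\<lambda>x. indicator F x * Z x)"
  have cW: "cond_integrable W" unfolding W_def
    by (rule cond_integrable_bound_mult[OF cZ, of _ "\<lambda>_. 1"]) (auto simp: indicator_def)
  have W_nonneg: "0 \<le> W x" for x unfolding W_def F_def by (auto simp: indicator_def)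
  have "AE \<omega> in M. cexp M G (\<lambda>x. Z x * - X x) \<omega>
          < cexp M G (\<lambda>x. Z x * - \<xi>0 x) \<omega> - ereal (real k) * cexp M G W \<omega>" for k :: nat
  proof -
    define \<xi> where "\<xi> = (\<lambda>x. \<xi>0 x + real k * indicator F x)"
    have "\<xi> \<in> LpG M G p" unfolding \<xi>_def
      by (rule LpG_add_bounded[OF \<xi>0_L p, of _ "\<lambda>_. real k"]) (auto simp: indicator_def)
    then have "\<xi> \<in> sublevel M G p \<rho> Y"
      by (rule sublevel_upward_closed[OF mon \<xi>0]) (auto simp: \<xi>_def)
    note sep_\<xi> = sep[OF this]
    have "AE x in M. cexp M G (\<lambda>x. Z x * - \<xi> x) x
            = cexp M G (\<lambda>x. Z x * - \<xi>0 x + - real k * W x) x"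
      by (rule cexp_cong_pointwise) (auto simp: \<xi>_def W_def algebra_simps)
    moreover have "AE x in M. cexp M G (\<lambda>x. Z x * - \<xi>0 x + - real k * W x) x
                     = cexp M G (\<lambda>x. Z x * - \<xi>0 x) x + ereal (- real k) * cexp M G W x"
      by (rule cexp_add_scaled[OF cond_integrable_pairing[OF Z \<xi>0_L] cW]) simp
    ultimately show ?thesis using sep_\<xi>
      by eventually_elim (simp add: minus_ereal_def ereal_uminus_mult_left)
  qed
  then have "AE x in M. W x = 0"
    by (rule zero_if_cexp_multiples_bounded[OF cW W_nonneg cond_integrable_pairing[OF Z X]
          cond_integrable_pairing[OF Z \<xi>0_L]])
  then show ?thesis using AE_space by eventually_elim (auto simp: W_def F_def indicator_def split: if_splits)
qed

text \<open>Given a separating density Z with E[Z|G] < 0, the normalised Q = Z/E[Z|G] satisfies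
  rho^*(-Q) \<le> E_Q[-X|G] - Y: each \<eta>, shifted into the sublevel set at level Y by cash
  additivity, is separated from X, and dividing by E[Z|G] < 0 reverses the inequality.\<close>
lemma penalty_bound_from_separation:
  assumes cas: "CAS M G p \<rho>" and Z: "Z \<in> LpG M G (conj_exp p)" and X: "X \<in> LpG M G p"
    and neg: "AE x in M. cexp M G Z x < 0" and [measurable]: "Y \<in> borel_measurable G"
    and sep: "\<And>\<xi>. \<xi> \<in> sublevel M G p \<rho> Y \<Longrightarrow>
           AE \<omega> in M. cexp M G (\<lambda>x. Z x * - X x) \<omega> < cexp M G (\<lambda>x. Z x * - \<xi> x) \<omega>"
  shows "AE \<omega> in M. rho_star M G p \<rho> (normalized_density M G Z) \<omega>
           \<le> cexp M G (\<lambda>x. normalized_density M G Z x * - X x) \<omega> - ereal (Y \<omega>)"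
proof (rule rho_star_least)
  define Q where "Q = normalized_density M G Z"
  define c where "c = (\<lambda>x. real_of_ereal (cexp M G Z x))"
  have c: "AE x in M. cexp M G Z x = ereal (c x) \<and> c x < 0"
    using cexp_finite[OF cond_integrable_LpG[OF Z conj_exp_ge1[OF p]]] neg unfolding c_def
  proof eventually_elim
    case (elim x)
    then show ?case by (cases "cexp M G Z x") auto
  qed
  show "(\<lambda>\<omega>. cexp M G (\<lambda>x. Q x * - X x) \<omega> - ereal (Y \<omega>)) \<in> borel_measurable G" by measurable
  fix \<eta> assume \<eta>: "\<eta> \<in> LpG M G p"
  have [measurable]: "\<rho> \<eta> \<in> borel_measurable G" using \<eta> by (rule rho_measurable_G)
  define L where "L = (\<lambda>x. \<rho> \<eta> x - Y x)"
  have [measurable]: "L \<in> borel_measurable G" unfolding L_def by measurable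
  have "(\<lambda>x. \<eta> x + L x) \<in> LpG M G p" by (rule LpG_add_G[OF \<eta> p]) simp
  moreover have "AE x in M. \<rho> (\<lambda>x. \<eta> x + L x) x = \<rho> \<eta> x - L x" using cas \<eta> unfolding CAS_def by auto
  ultimately have "(\<lambda>x. \<eta> x + L x) \<in> sublevel M G p \<rho> Y"
    unfolding sublevel_def L_def by (auto elim: eventually_mono)
  note sep_\<eta> = sep[OF this]
  have shift: "AE x in M. cexp M G (\<lambda>x. Z x * - (\<eta> x + L x)) x
                 = cexp M G (\<lambda>x. Z x * - \<eta> x) x - ereal (L x) * cexp M G Z x"
    by (rule pairing_shift[OF Z \<eta>]) simp
  show "AE \<omega> in M. cexp M G (\<lambda>x. Q x * - \<eta> x) \<omega> - ereal (\<rho> \<eta> \<omega>)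
                      \<le> cexp M G (\<lambda>x. Q x * - X x) \<omega> - ereal (Y \<omega>)"
    using sep_\<eta> shift c pairing_finite[OF Z \<eta>] pairing_finite[OF Z X]
      cexp_normalized_density[OF cond_integrable_pairing[OF Z \<eta>]]
      cexp_normalized_density[OF cond_integrable_pairing[OF Z X]]
    unfolding Q_def
  proof eventually_elim
    case (elim x)
    obtain a b where a: "cexp M G (\<lambda>x. Z x * - \<eta> x) x = ereal a"
      and b: "cexp M G (\<lambda>x. Z x * - X x) x = ereal b" using elim(4,5) by metis
    have "b < a - L x * c x" using elim(1,2,3) a b by simp
    then have "(a - L x * c x) / c x < b / c x" using elim(3) by (simp add: divide_strict_right_mono_neg)
    then have "a / c x - \<rho> \<eta> x \<le> b / c x - Y x" using elim(3) by (simp add: diff_divide_distrib L_def)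
    then show ?case using elim(6,7) a b by (simp add: c_def)
  qed
qed

lemma approximate_dual_representation:
  assumes reg: "REG M G p \<rho>" and mon: "MON_dec M G p \<rho>" and evq: "EVQ M G p \<rho>"
    and cas: "CAS M G p \<rho>" and X: "X \<in> LpG M G p" and \<epsilon>: "0 < \<epsilon>"
  shows "\<exists>Q\<in>PqG M G (conj_exp p). AE \<omega> in M.
           ereal (\<rho> X \<omega> - \<epsilon>) \<le> cexp M G (\<lambda>x. Q x * - X x) \<omega> - rho_star M G p \<rho> Q \<omega>"
proof -
  define Y where "Y = (\<lambda>\<omega>. \<rho> X \<omega> - \<epsilon>)"
  have [measurable]: "\<rho> X \<in> borel_measurable G" "Y \<in> borel_measurable G"
    using rho_measurable_G[OF X] unfolding Y_def by auto
  obtain Z where Z: "Z \<in> LpG M G (conj_exp p)" and sep: "\<And>\<xi>. \<xi> \<in> sublevel M G p \<rho> Y \<Longrightarrow>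
      AE \<omega> in M. cexp M G (\<lambda>x. Z x * - X x) \<omega> < cexp M G (\<lambda>x. Z x * - \<xi> x) \<omega>"
    using separating_density[OF reg evq cas X \<epsilon>] unfolding Y_def by blast
  define \<xi>0 where "\<xi>0 = (\<lambda>x. X x + \<epsilon>)"
  have \<xi>0_L: "\<xi>0 \<in> LpG M G p" unfolding \<xi>0_def using LpG_add_G[OF X p, of "\<lambda>_. \<epsilon>"] by simp
  moreover have "AE \<omega> in M. \<rho> \<xi>0 \<omega> = Y \<omega>" using cas X unfolding CAS_def \<xi>0_def Y_def by auto
  ultimately have \<xi>0: "\<xi>0 \<in> sublevel M G p \<rho> Y" unfolding sublevel_def by auto
  have Z_le: "AE \<omega> in M. Z \<omega> \<le> 0" by (rule separating_density_nonpos[OF mon Z X \<xi>0 sep])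
  have neg: "AE x in M. cexp M G Z x < 0"
    by (rule cexp_neg_if_nonpos_separating[OF Z_le cond_integrable_pairing[OF Z X]
          cond_integrable_pairing[OF Z \<xi>0_L] sep[OF \<xi>0] LpG_measurable[OF Z]])
  define Q where "Q = normalized_density M G Z"
  have Q: "Q \<in> PqG M G (conj_exp p)"
    unfolding Q_def by (rule normalized_density_PqG[OF Z conj_exp_ge1[OF p] Z_le neg])
  have "AE \<omega> in M. rho_star M G p \<rho> Q \<omega> \<le> cexp M G (\<lambda>x. Q x * - X x) \<omega> - ereal (Y \<omega>)"
    unfolding Q_def by (rule penalty_bound_from_separation[OF cas Z X neg _ sep]) simp
  then have "AE \<omega> in M. ereal (Y \<omega>) \<le> cexp M G (\<lambda>x. Q x * - X x) \<omega> - rho_star M G p \<rho> Q \<omega>"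
    using pairing_finite[OF PqG_LpG[OF Q] X] by eventually_elim (metis ereal_diff_le_swap)
  with Q show ?thesis unfolding Y_def by auto
qed

lemma ereal_le_if_approximations_le:
  assumes "\<And>n::nat. ereal (a - 1 / (real n + 1)) \<le> s"
  shows "ereal a \<le> s"
proof (rule ereal_le_epsilon2)
  fix e :: real assume "0 < e"
  then obtain n :: nat where "1 / (real n + 1) < e" by (metis add.commute nat_approx_posE of_nat_Suc)
  then have "ereal a \<le> ereal (a - 1 / (real n + 1)) + ereal e" by simp
  also have "\<dots> \<le> s + ereal e" using assms by (intro add_right_mono) auto
  finally show "ereal a \<le> s + ereal e" .
qed

theorem dual_representation:
  assumes reg: "REG M G p \<rho>" and mon: "MON_dec M G p \<rho>" and evq: "EVQ M G p \<rho>"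
    and cas: "CAS M G p \<rho>" and X: "X \<in> LpG M G p"
  shows "AE \<omega> in M. ereal (\<rho> X \<omega>)
      = cond_ess_sup M G ((\<lambda>Q \<omega>. cexp M G (\<lambda>x. Q x * - X x) \<omega> - rho_star M G p \<rho> Q \<omega>) ` PqG M G (conj_exp p)) \<omega>"
proof -
  define S where "S = cond_ess_sup M G
      ((\<lambda>Q \<omega>. cexp M G (\<lambda>x. Q x * - X x) \<omega> - rho_star M G p \<rho> Q \<omega>) ` PqG M G (conj_exp p))"
  have [measurable]: "\<rho> X \<in> borel_measurable G" using X by (rule rho_measurable_G)
  have "AE \<omega> in M. S \<omega> \<le> ereal (\<rho> X \<omega>)"
    unfolding S_def
  proof (rule cond_ess_sup_least)
    fix g assume "g \<in> (\<lambda>Q \<omega>. cexp M G (\<lambda>x. Q x * - X x) \<omega> - rho_star M G p \<rho> Q \<omega>) ` PqG M G (conj_exp p)"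
    then obtain Q where Q: "Q \<in> PqG M G (conj_exp p)"
      and g: "g = (\<lambda>\<omega>. cexp M G (\<lambda>x. Q x * - X x) \<omega> - rho_star M G p \<rho> Q \<omega>)" by auto
    show "AE \<omega> in M. g \<omega> \<le> ereal (\<rho> X \<omega>)"
      using fenchel_inequality[OF X, of Q] pairing_finite[OF PqG_LpG[OF Q] X] unfolding g
      by eventually_elim (metis ereal_diff_le_real)
  qed simp
  moreover have "AE \<omega> in M. ereal (\<rho> X \<omega> - 1 / (real n + 1)) \<le> S \<omega>" for n :: nat
  proof -
    obtain Q where Q: "Q \<in> PqG M G (conj_exp p)" and approx: "AE \<omega> in M.
        ereal (\<rho> X \<omega> - 1 / (real n + 1)) \<le> cexp M G (\<lambda>x. Q x * - X x) \<omega> - rho_star M G p \<rho> Q \<omega>"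
      using approximate_dual_representation[OF reg mon evq cas X, of "1 / (real n + 1)"] by auto
    have "AE \<omega> in M. cexp M G (\<lambda>x. Q x * - X x) \<omega> - rho_star M G p \<rho> Q \<omega> \<le> S \<omega>"
      unfolding S_def using Q by (intro cond_ess_sup_upper) auto
    with approx show ?thesis by eventually_elim (rule order_trans)
  qed
  then have "AE \<omega> in M. \<forall>n::nat. ereal (\<rho> X \<omega> - 1 / (real n + 1)) \<le> S \<omega>"
    by (simp add: AE_all_countable)
  then have "AE \<omega> in M. ereal (\<rho> X \<omega>) \<le> S \<omega>"
    by eventually_elim (rule ereal_le_if_approximations_le, blast)
  ultimately show ?thesis unfolding S_def by eventually_elim (rule antisym)
qed

end

theorem mainTheorem3:
  fixes M G :: "'a measure" and p :: ereal and \<rho> :: "('a \<Rightarrow> real) \<Rightarrow> ('a \<Rightarrow> real)"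
  assumes "prob_space M" and "subalgebra M G" and "1 \<le> p"
    and "well_defined_ae M G p \<rho>"
  shows "(MON_dec M G p \<rho> \<and> REG M G p \<rho> \<and> CAS M G p \<rho> \<longrightarrow>
           (\<forall>Z\<in>PqG M G (conj_exp p). \<forall>X\<in>LpG M G p.
              AE \<omega> in M. R_fun M G p \<rho> (cexp M G (\<lambda>x. Z x * - X x)) Z \<omega>
                 = cexp M G (\<lambda>x. Z x * - X x) \<omega> - rho_star M G p \<rho> Z \<omega>))
       \<and> (REG M G p \<rho> \<and> MON_dec M G p \<rho> \<and> EVQ M G p \<rho> \<and> CAS M G p \<rho> \<longrightarrow>
           (\<forall>X\<in>LpG M G p.
              AE \<omega> in M. ereal (\<rho> X \<omega>)
                 = cond_ess_sup M G ((\<lambda>Z. \<lambda>\<omega>. cexp M G (\<lambda>x. Z x * - X x) \<omega> - rho_star M G p \<rho> Z \<omega>)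
                                     ` PqG M G (conj_exp p)) \<omega>))"
proof -
  interpret cond_risk_functional M G p \<rho>
    by (rule cond_risk_functional.intro, rule prob_subalgebra.intro, fact, unfold_locales)
       (use assms in auto)
  show ?thesis using minimal_risk_representation dual_representation by blast
qed

end
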